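(* Let $\rho=|\psi\rangle\langle\psi|$ be an $n$-qubit pure state, $S\subseteq[n]$ non-empty with $s=|S|$, $\epsilon>0$ and $1-\delta\in(0,1)$. Let $N_B=\lceil 8\log(1/\delta)\rceil$ and $$K_{\mathrm{opt}}=\left\lceil\frac12\Big(\frac{16}{\epsilon^2}\Big(\frac32\Big)^s+1\Big)+\frac12\sqrt{\Big(\frac{16}{\epsilon^2}\Big(\frac32\Big)^s-1\Big)^2+\frac{32}{\epsilon^2}3^s}\,\right\rceil.$$ Perform $M=N_BK_{\mathrm{opt}}$ independent local SIC-POVM measurements on the qubits of $S$ of copies of $\rho$, with i.i.d. outcomes $\mathbf{Q}_1,\dots,\mathbf{Q}_M\in\{1,2,3,4\}^s$ distributed as $P(\mathbf{q})=\operatorname{tr}\big(\rho\bigotimes_{i\in S}|\tilde\phi_{q_i}\rangle\langle\tilde\phi_{q_i}|\big)$. For $1\le b\le N_B$ let $$\hat S_b=\frac{1}{K_{\mathrm{opt}}(K_{\mathrm{opt}}-1)}\sum_{\substack{k,k'=(b-1)K_{\mathrm{opt}}+1\\k\ne k'}}^{bK_{\mathrm{opt}}}\mathbb{1}[\mathbf{Q}_k=\mathbf{Q}_{k'}],\qquad \overline{\mathcal{C}}^{(b)}_{|\psi\rangle}(S)=1-3^s\hat S_b.$$ Then $$\Pr\Big[\big|\operatorname{median}\big(\overline{\mathcal{C}}^{(1)}_{|\psi\rangle}(S),\dots,\overline{\mathcal{C}}^{(N_B)}_{|\psi\rangle}(S)\big)-\mathcal{C}_{|\psi\rangle}(S)\big|\ge\epsilon\Big]\le\delta,$$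 giving an upper bound $O\big(\big[(3/2)^s\epsilon^{-2}+\sqrt{3^s}\,\epsilon^{-1}\big]\log(1/\delta)\big)$ on the number of SIC measurements needed to estimate $\mathcal{C}_{|\psi\rangle}(S)$.
   Context: $[n]=\{1,\dots,n\}$ labels the qubits. For an $n$-qubit pure state $|\psi\rangle$ and a non-empty $S\subseteq[n]$ with $s=|S|$, the concentratable entanglement is $\mathcal{C}_{|\psi\rangle}(S)=1-\frac{1}{2^s}\sum_{\alpha\subseteq S}\operatorname{tr}(\rho_\alpha^2)$, where $\rho_\alpha$ is the reduced state of $|\psi\rangle\langle\psi|$ on the qubits in $\alpha$, and $\operatorname{tr}(\rho_\emptyset^2):=1$. A single-qubit SIC-POVM consists of $|\tilde\phi_j\rangle=\frac{1}{\sqrt2}|\phi_j\rangle$, $j=1,\dots,4$, where $|\phi_j\rangle$ are unit vectors in $\mathbb{C}^2$ with $|\langle\phi_j|\phi_k\rangle|^2=1/3$ for $j\neq k$, so that $\sum_j|\tilde\phi_j\rangle\langle\tilde\phi_j|=\mathbb{I}$. $\mathbb{1}[A]$ is $1$ if $A$ holds and $0$ otherwise. *)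

theory Defs
  imports Complex_Main "HOL-Library.FuncSet"
begin

(* Qubits are labelled 1..n.  A computational-basis label of the qubits in a set A is an
   element of  A \<rightarrow>\<^sub>E {0,1}  (bit value of each qubit in A, extensional). *)
definition bits :: "nat set \<Rightarrow> (nat \<Rightarrow> nat) set" where
  "bits A = A \<rightarrow>\<^sub>E {0, 1}"

(* An n-qubit pure state |psi> = sum_x psi x |x>, x ranging over bits {1..n}; unit norm. *)
definition pure_state :: "nat \<Rightarrow> ((nat \<Rightarrow> nat) \<Rightarrow> complex) \<Rightarrow> bool" where
  "pure_state n \<psi> \<longleftrightarrow> (\<Sum>x\<in>bits {1..n}. (cmod (\<psi> x))\<^sup>2) = 1"

definition merge :: "nat set \<Rightarrow> (nat \<Rightarrow> nat) \<Rightarrow> (nat \<Rightarrow> nat) \<Rightarrow> (nat \<Rightarrow> nat)" where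
  "merge \<alpha> a c = (\<lambda>i. if i \<in> \<alpha> then a i else c i)"

(* matrix entry <a|rho_alpha|a'> of the reduced state on \<alpha> of |psi><psi| (partial trace
   over the qubits in {1..n} - \<alpha>) *)
definition reduced :: "nat \<Rightarrow> ((nat \<Rightarrow> nat) \<Rightarrow> complex) \<Rightarrow> nat set
    \<Rightarrow> (nat \<Rightarrow> nat) \<Rightarrow> (nat \<Rightarrow> nat) \<Rightarrow> complex" where
  "reduced n \<psi> \<alpha> a a' =
     (\<Sum>c\<in>bits ({1..n} - \<alpha>). \<psi> (merge \<alpha> a c) * cnj (\<psi> (merge \<alpha> a' c)))"

(* tr(rho_alpha^2), with tr(rho_{} ^2) := 1 *)
definition purity :: "nat \<Rightarrow> ((nat \<Rightarrow> nat) \<Rightarrow> complex) \<Rightarrow> nat set \<Rightarrow> real" where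
  "purity n \<psi> \<alpha> = (if \<alpha> = {} then 1 else
     Re (\<Sum>a\<in>bits \<alpha>. \<Sum>a'\<in>bits \<alpha>. reduced n \<psi> \<alpha> a a' * reduced n \<psi> \<alpha> a' a))"

definition conc_ent :: "nat \<Rightarrow> ((nat \<Rightarrow> nat) \<Rightarrow> complex) \<Rightarrow> nat set \<Rightarrow> real" where
  "conc_ent n \<psi> S = 1 - (1 / 2 ^ card S) * (\<Sum>\<alpha>\<in>Pow S. purity n \<psi> \<alpha>)"

(* single-qubit SIC: \<phi> j b = b-th component (b \<in> {0,1}) of the unit vector |phi_j>, j \<in> {1..4} *)
definition sic :: "(nat \<Rightarrow> nat \<Rightarrow> complex) \<Rightarrow> bool" where
  "sic \<phi> \<longleftrightarrow>
     (\<forall>j\<in>{1..4}. (\<Sum>b\<in>{0,1}. (cmod (\<phi> j b))\<^sup>2) = 1) \<and>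
     (\<forall>j\<in>{1..4}. \<forall>k\<in>{1..4}. j \<noteq> k \<longrightarrow>
        (cmod (\<Sum>b\<in>{0,1}. cnj (\<phi> j b) * \<phi> k b))\<^sup>2 = 1 / 3)"

(* entry <b|phi~_j><phi~_j|b'> of the POVM element, phi~_j = phi_j / sqrt 2 *)
definition povm_elem :: "(nat \<Rightarrow> nat \<Rightarrow> complex) \<Rightarrow> nat \<Rightarrow> nat \<Rightarrow> nat \<Rightarrow> complex" where
  "povm_elem \<phi> j b b' =
     (\<phi> j b / complex_of_real (sqrt 2)) * cnj (\<phi> j b' / complex_of_real (sqrt 2))"

(* P(q) = tr( rho (\<Otimes>_{i\<in>S} |phi~_{q_i}><phi~_{q_i}| \<otimes> Id_{[n]-S}) ), q \<in> S \<rightarrow>\<^sub>E {1..4} *)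
definition sic_prob :: "nat \<Rightarrow> ((nat \<Rightarrow> nat) \<Rightarrow> complex) \<Rightarrow> (nat \<Rightarrow> nat \<Rightarrow> complex)
    \<Rightarrow> nat set \<Rightarrow> (nat \<Rightarrow> nat) \<Rightarrow> real" where
  "sic_prob n \<psi> \<phi> S q = Re (\<Sum>x\<in>bits {1..n}. \<Sum>y\<in>bits {1..n}.
      (\<psi> x * cnj (\<psi> y)) *
      ((\<Prod>i\<in>S. povm_elem \<phi> (q i) (y i) (x i)) *
       (if \<forall>i\<in>{1..n} - S. y i = x i then 1 else 0)))"

definition median :: "real list \<Rightarrow> real" where
  "median xs = (let ys = sort xs; m = length xs in
     if odd m then ys ! (m div 2) else (ys ! (m div 2 - 1) + ys ! (m div 2)) / 2)"

definition N_B :: "real \<Rightarrow> nat" where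
  "N_B \<delta> = nat \<lceil>8 * ln (1 / \<delta>)\<rceil>"

definition K_opt :: "real \<Rightarrow> nat \<Rightarrow> nat" where
  "K_opt \<epsilon> s = nat \<lceil>(1/2) * ((16 / \<epsilon>\<^sup>2) * (3/2) ^ s + 1)
      + (1/2) * sqrt (((16 / \<epsilon>\<^sup>2) * (3/2) ^ s - 1)\<^sup>2 + (32 / \<epsilon>\<^sup>2) * 3 ^ s)\<rceil>"

definition S_hat :: "nat \<Rightarrow> (nat \<Rightarrow> (nat \<Rightarrow> nat)) \<Rightarrow> nat \<Rightarrow> real" where
  "S_hat K Q b = (1 / (real K * (real K - 1))) *
     (\<Sum>k\<in>{(b - 1) * K + 1 .. b * K}. \<Sum>k'\<in>{(b - 1) * K + 1 .. b * K}.
        if k \<noteq> k' \<and> Q k = Q k' then 1 else 0)"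

definition CE_est :: "nat \<Rightarrow> nat \<Rightarrow> (nat \<Rightarrow> (nat \<Rightarrow> nat)) \<Rightarrow> nat \<Rightarrow> real" where
  "CE_est s K Q b = 1 - 3 ^ s * S_hat K Q b"

end

(*
  A qubit SIC-POVM is a 2-design: sum_j |phi_j><phi_j| (x) |phi_j><phi_j| = (2/3) (I + SWAP).
  Applied to every qubit of S this gives sum_q P(q)^2 = 6^-s sum_{alpha <= S} tr(rho_alpha^2),
  i.e. C(S) = 1 - 3^s p2, where p2 = sum_q P(q)^2 is the probability that two independent
  outcomes coincide.  The fraction S_b of coinciding pairs in a batch of K outcomes is an unbiased
  U-statistic for p2 with variance at most (4 (K - 1) p3 + 2 p2) / (K (K - 1)), where
  p3 = sum_q P(q)^3 <= 2^-s p2 and p2 <= 3^-s.  K_opt is chosen so that, by Chebyshev, a batch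
  estimate misses C(S) by epsilon with probability at most 1/4.  If the median misses, at least
  half of the N_B independent batches miss; Markov's inequality for 3^(number of missing batches),
  whose expectation factorises into at most (3/2)^N_B, bounds this by
  (sqrt 3 / 2)^N_B <= exp (-N_B / 8) <= delta.
*)
theory Submission
  imports Defs "HOL-Analysis.Convex"
begin

section \<open>SIC-POVMs are 2-designs\<close>

lemma eq_if_inner_products_eq:
  fixes L R :: "'a \<Rightarrow> complex"
  assumes "finite X" "x \<in> X"
    and LL: "(\<Sum>x\<in>X. L x * cnj (L x)) = c"
    and LR: "(\<Sum>x\<in>X. L x * cnj (R x)) = c"
    and RR: "(\<Sum>x\<in>X. R x * cnj (R x)) = c"
  shows "L x = R x"
proof -
  have "cnj c = c"
    unfolding LL[symmetric] cnj_sum by (simp add: mult.commute)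
  moreover have RL: "(\<Sum>x\<in>X. R x * cnj (L x)) = cnj c"
    unfolding LR[symmetric] cnj_sum by (simp add: mult.commute)
  ultimately have "complex_of_real (\<Sum>x\<in>X. (cmod (L x - R x))\<^sup>2) = 0"
    unfolding of_real_sum complex_norm_square
    by (simp add: algebra_simps sum.distrib sum_subtractf LL LR RR RL)
  then have "(\<Sum>x\<in>X. (cmod (L x - R x))\<^sup>2) = 0"
    by (simp only: of_real_eq_0_iff)
  with assms(1,2) show ?thesis
    by (simp add: sum_nonneg_eq_0_iff)
qed

definition sic_overlap :: "(nat \<Rightarrow> nat \<Rightarrow> complex) \<Rightarrow> nat \<Rightarrow> nat \<Rightarrow> complex" where
  "sic_overlap \<phi> j k = (\<Sum>b\<in>{0,1}. cnj (\<phi> j b) * \<phi> k b)"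

lemma sic_overlap_self:
  assumes "sic \<phi>" "j \<in> {1..4}"
  shows "sic_overlap \<phi> j j = 1"
proof -
  have "complex_of_real (\<Sum>b\<in>{0::nat,1}. (cmod (\<phi> j b))\<^sup>2) = 1"
    using assms unfolding sic_def by simp
  then show ?thesis
    unfolding sic_overlap_def of_real_sum complex_norm_square by (simp add: mult.commute)
qed

lemma sic_overlap_distinct:
  assumes "sic \<phi>" "j \<in> {1..4}" "k \<in> {1..4}" "j \<noteq> k"
  shows "sic_overlap \<phi> j k * cnj (sic_overlap \<phi> j k) = 1/3"
proof -
  have "(cmod (sic_overlap \<phi> j k))\<^sup>2 = 1/3"
    using assms unfolding sic_def sic_overlap_def by blast
  from arg_cong[OF this, of complex_of_real] show ?thesis
    unfolding complex_norm_square by simp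
qed

lemma sum_four_fold_product:
  "(\<Sum>(b1, b2, b3, b4)\<in>B \<times> B \<times> B \<times> B. f1 b1 * f2 b2 * f3 b3 * f4 b4)
     = (\<Sum>b\<in>B. f1 b) * (\<Sum>b\<in>B. f2 b) * (\<Sum>b\<in>B. f3 b) * (\<Sum>b\<in>B. (f4 b :: 'a :: comm_semiring_1))"
  by (simp only: sum.cartesian_product[symmetric] case_prod_conv
      sum_distrib_left[symmetric] sum_distrib_right[symmetric])

text \<open>\<open>sic_moment \<phi>\<close> and \<open>swap_moment\<close> are the matrix entries of
  \<open>\<Sum>\<^sub>j |\<phi>\<^sub>j\<rangle>\<langle>\<phi>\<^sub>j| \<otimes> |\<phi>\<^sub>j\<rangle>\<langle>\<phi>\<^sub>j|\<close> and of \<open>(2/3)(I + SWAP)\<close>.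
  Both have squared Hilbert--Schmidt norm \<open>16/3\<close>, which is also their inner product, so they coincide.\<close>

definition sic_moment :: "(nat \<Rightarrow> nat \<Rightarrow> complex) \<Rightarrow> nat \<times> nat \<times> nat \<times> nat \<Rightarrow> complex" where
  "sic_moment \<phi> = (\<lambda>(b1, b2, b3, b4). \<Sum>j\<in>{1..4}. \<phi> j b1 * cnj (\<phi> j b2) * \<phi> j b3 * cnj (\<phi> j b4))"

definition swap_moment :: "nat \<times> nat \<times> nat \<times> nat \<Rightarrow> complex" where
  "swap_moment = (\<lambda>(b1, b2, b3, b4).
     2/3 * ((if b1 = b2 \<and> b3 = b4 then 1 else 0) + (if b1 = b4 \<and> b3 = b2 then 1 else 0)))"

lemma sum_sic_moment_sq:
  assumes "sic \<phi>"
  shows "(\<Sum>x\<in>{0,1} \<times> {0,1} \<times> {0,1} \<times> {0::nat,1}. sic_moment \<phi> x * cnj (sic_moment \<phi> x)) = 16/3"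
proof -
  define B where "B = {0::nat, 1}"
  define J where "J = {1..4::nat}"
  define g where "g = sic_overlap \<phi>"
  have "(\<Sum>x\<in>B \<times> B \<times> B \<times> B. sic_moment \<phi> x * cnj (sic_moment \<phi> x))
      = (\<Sum>j\<in>J. \<Sum>k\<in>J. \<Sum>(b1, b2, b3, b4)\<in>B \<times> B \<times> B \<times> B.
          (\<phi> j b1 * cnj (\<phi> k b1)) * (cnj (\<phi> j b2) * \<phi> k b2) * (\<phi> j b3 * cnj (\<phi> k b3))
          * (cnj (\<phi> j b4) * \<phi> k b4))"
    unfolding sic_moment_def J_def[symmetric] cnj_sum sum_product split_def
      sum.swap[of _ "B \<times> B \<times> B \<times> B"]
    by (intro sum.cong refl) (simp add: mult_ac)
  also have "\<dots> = (\<Sum>j\<in>J. \<Sum>k\<in>J. (g j k * cnj (g j k)) * (g j k * cnj (g j k)))"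
    unfolding sum_four_fold_product g_def sic_overlap_def B_def
    by (intro sum.cong refl) (simp add: algebra_simps)
  also have "\<dots> = (\<Sum>j\<in>J. \<Sum>k\<in>J. if j = k then 1 else 1/9)"
  proof (intro sum.cong refl)
    fix j k assume "j \<in> J" "k \<in> J"
    show "(g j k * cnj (g j k)) * (g j k * cnj (g j k)) = (if j = k then 1 else 1/9)"
    proof (cases "j = k")
      case True
      then show ?thesis using sic_overlap_self[OF assms] \<open>j \<in> J\<close> by (simp add: g_def J_def)
    next
      case False
      then have "g j k * cnj (g j k) = 1/3"
        using sic_overlap_distinct[OF assms] \<open>j \<in> J\<close> \<open>k \<in> J\<close> by (simp add: g_def J_def)
      then show ?thesis using False by (simp only: if_False) simp
    qed
  qed
  also have "J = {1, 2, 3, 4}"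
    unfolding J_def by auto
  finally show ?thesis
    unfolding B_def by simp
qed

lemma sum_sic_moment_swap_moment:
  assumes "sic \<phi>"
  shows "(\<Sum>x\<in>{0,1} \<times> {0,1} \<times> {0,1} \<times> {0::nat,1}. sic_moment \<phi> x * cnj (swap_moment x)) = 16/3"
proof -
  define B where "B = {0::nat, 1}"
  have "(\<Sum>x\<in>B \<times> B \<times> B \<times> B. sic_moment \<phi> x * cnj (swap_moment x))
      = (\<Sum>j\<in>{1..4}. \<Sum>x\<in>B \<times> B \<times> B \<times> B. (case x of (b1, b2, b3, b4) \<Rightarrow>
          \<phi> j b1 * cnj (\<phi> j b2) * \<phi> j b3 * cnj (\<phi> j b4)) * cnj (swap_moment x))"
    unfolding sic_moment_def case_prod_beta sum_distrib_right by (rule sum.swap)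
  also have "\<dots> = (\<Sum>j\<in>{1..4}. 4/3 * (\<phi> j 0 * cnj (\<phi> j 0) + \<phi> j 1 * cnj (\<phi> j 1))\<^sup>2)"
    unfolding swap_moment_def B_def
    by (intro sum.cong refl) (simp add: sum.cartesian_product[symmetric], simp add: power2_eq_square field_simps)
  also have "\<dots> = (\<Sum>j\<in>{1..4::nat}. 4/3)"
    using sic_overlap_self[OF assms] unfolding sic_overlap_def by (intro sum.cong refl) (simp add: mult.commute)
  finally show ?thesis
    unfolding B_def by simp
qed

lemma sum_swap_moment_sq:
  "(\<Sum>x\<in>{0,1} \<times> {0,1} \<times> {0,1} \<times> {0::nat,1}. swap_moment x * cnj (swap_moment x)) = 16/3"
  unfolding swap_moment_def by (simp add: sum.cartesian_product[symmetric])

lemma sic_two_design: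
  assumes "sic \<phi>" and b: "b1 \<in> {0,1}" "b2 \<in> {0,1}" "b3 \<in> {0,1}" "b4 \<in> {0,1}"
  shows "(\<Sum>j\<in>{1..4}. \<phi> j b1 * cnj (\<phi> j b2) * \<phi> j b3 * cnj (\<phi> j b4))
    = 2/3 * ((if b1 = b2 \<and> b3 = b4 then 1 else 0) + (if b1 = b4 \<and> b3 = b2 then 1 else 0))"
proof -
  have b4: "(b1, b2, b3, b4) \<in> {0,1} \<times> {0,1} \<times> {0,1} \<times> {0::nat,1}"
    using b by blast
  have "sic_moment \<phi> (b1, b2, b3, b4) = swap_moment (b1, b2, b3, b4)"
    by (rule eq_if_inner_products_eq[OF _ b4 sum_sic_moment_sq[OF assms(1)]
          sum_sic_moment_swap_moment[OF assms(1)] sum_swap_moment_sq]) simp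
  then show ?thesis
    unfolding sic_moment_def swap_moment_def by simp
qed

lemma povm_elem_eq: "povm_elem \<phi> j b b' = \<phi> j b * cnj (\<phi> j b') / 2"
proof -
  have sqrt2: "complex_of_real (sqrt 2) * complex_of_real (sqrt 2) = 2"
    by (simp flip: of_real_mult)
  show ?thesis
    unfolding povm_elem_def complex_cnj_divide complex_cnj_complex_of_real times_divide_times_eq sqrt2 ..
qed

lemma sic_povm_sum:
  assumes "sic \<phi>" "b \<in> {0,1}" "b' \<in> {0,1}"
  shows "(\<Sum>j\<in>{1..4}. povm_elem \<phi> j b b') = (if b = b' then 1 else 0)"
proof -
  have "(\<Sum>j\<in>{1..4}. \<phi> j b * cnj (\<phi> j b'))
      = (\<Sum>j\<in>{1..4}. \<phi> j b * cnj (\<phi> j b') * (\<Sum>c\<in>{0::nat,1}. cnj (\<phi> j c) * \<phi> j c))"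
    using sic_overlap_self[OF assms(1)] unfolding sic_overlap_def by simp
  also have "\<dots> = (\<Sum>c\<in>{0::nat,1}. \<Sum>j\<in>{1..4}. \<phi> j b * cnj (\<phi> j b') * \<phi> j c * cnj (\<phi> j c))"
    unfolding sum_distrib_left by (subst sum.swap) (simp add: mult_ac)
  also have "\<dots> = (\<Sum>c\<in>{0::nat,1}.
      2/3 * ((if b = b' \<and> c = c then 1 else 0) + (if b = c \<and> c = b' then 1 else 0)))"
    using assms by (intro sum.cong refl sic_two_design) auto
  also have "\<dots> = 2 * (if b = b' then 1 else 0)"
    using assms(2,3) unfolding insert_iff by (elim disjE) simp_all
  finally show ?thesis
    unfolding povm_elem_eq sum_divide_distrib[symmetric] by simp
qed

lemma sic_povm_pair_sum:
  assumes "sic \<phi>" "y \<in> {0,1}" "x \<in> {0,1}" "y' \<in> {0,1}" "x' \<in> {0,1}"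
  shows "(\<Sum>j\<in>{1..4}. povm_elem \<phi> j y x * povm_elem \<phi> j y' x')
     = 1/6 * ((if y = x \<and> y' = x' then 1 else 0) + (if y = x' \<and> y' = x then 1 else 0))"
proof -
  have "(\<Sum>j\<in>{1..4}. povm_elem \<phi> j y x * povm_elem \<phi> j y' x')
      = (\<Sum>j\<in>{1..4}. \<phi> j y * cnj (\<phi> j x) * \<phi> j y' * cnj (\<phi> j x')) / 4"
    unfolding povm_elem_eq sum_divide_distrib by (simp add: mult_ac)
  also have "\<dots> = 2/3 * ((if y = x \<and> y' = x' then 1 else 0) + (if y = x' \<and> y' = x then 1 else 0)) / 4"
    unfolding sic_two_design[OF assms] ..
  finally show ?thesis
    by (simp only: divide_inverse) (simp split del: if_split)
qed

section \<open>The outcome distribution of a local SIC measurement\<close>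

lemma finite_bits [simp]: "finite A \<Longrightarrow> finite (bits A)"
  unfolding bits_def by (simp add: finite_PiE)

lemma bits_range: "x \<in> bits A \<Longrightarrow> i \<in> A \<Longrightarrow> x i \<in> {0,1}"
  unfolding bits_def by auto

lemma bits_eqI: "x \<in> bits A \<Longrightarrow> y \<in> bits A \<Longrightarrow> (\<And>i. i \<in> A \<Longrightarrow> x i = y i) \<Longrightarrow> x = y"
  unfolding bits_def by (rule extensionalityI[of _ A]) (auto simp: PiE_def)

lemma restrict_in_bits: "x \<in> bits U \<Longrightarrow> R \<subseteq> U \<Longrightarrow> restrict x R \<in> bits R"
  unfolding bits_def by (auto simp: PiE_iff)

lemma merge_in_bits: "x \<in> bits U \<Longrightarrow> x' \<in> bits U \<Longrightarrow> \<alpha> \<subseteq> U \<Longrightarrow> merge \<alpha> x' x \<in> bits U"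
  unfolding bits_def merge_def by (auto simp: PiE_iff extensional_def)

lemma sum_bits_merge:
  assumes "\<alpha> \<subseteq> U"
  shows "(\<Sum>x\<in>bits U. g x) = (\<Sum>a\<in>bits \<alpha>. \<Sum>c\<in>bits (U - \<alpha>). g (merge \<alpha> a c))"
proof -
  have "(\<Sum>x\<in>bits U. g x) = (\<Sum>(a, c)\<in>bits \<alpha> \<times> bits (U - \<alpha>). g (merge \<alpha> a c))"
  proof (rule sum.reindex_bij_witness[where i="\<lambda>(a, c). merge \<alpha> a c"
        and j="\<lambda>x. (restrict x \<alpha>, restrict x (U - \<alpha>))"])
    fix x assume "x \<in> bits U"
    then show "(\<lambda>(a, c). merge \<alpha> a c) (restrict x \<alpha>, restrict x (U - \<alpha>)) = x"
      using assms unfolding bits_def merge_def by (auto simp: PiE_iff extensional_def fun_eq_iff)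
    then show "(\<lambda>(a, c). g (merge \<alpha> a c)) (restrict x \<alpha>, restrict x (U - \<alpha>)) = g x"
      by simp
    show "(restrict x \<alpha>, restrict x (U - \<alpha>)) \<in> bits \<alpha> \<times> bits (U - \<alpha>)"
      using \<open>x \<in> bits U\<close> assms by (simp add: restrict_in_bits)
  next
    fix ac assume "ac \<in> bits \<alpha> \<times> bits (U - \<alpha>)"
    then obtain a c where ac: "ac = (a, c)" "a \<in> bits \<alpha>" "c \<in> bits (U - \<alpha>)"
      by auto
    then show "(restrict ((\<lambda>(a, c). merge \<alpha> a c) ac) \<alpha>,
        restrict ((\<lambda>(a, c). merge \<alpha> a c) ac) (U - \<alpha>)) = ac"
      unfolding bits_def merge_def by (auto simp: PiE_iff extensional_def fun_eq_iff)
    show "(\<lambda>(a, c). merge \<alpha> a c) ac \<in> bits U"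
      using ac assms unfolding bits_def merge_def by (auto simp: PiE_iff extensional_def)
  qed
  then show ?thesis
    by (simp add: sum.cartesian_product)
qed

lemma prod_indicator:
  "finite S \<Longrightarrow> (\<Prod>i\<in>S. if P i then 1 else 0 :: 'a :: comm_semiring_1) = (if \<forall>i\<in>S. P i then 1 else 0)"
  by (induction S rule: finite_induct) auto

lemma pure_state_sum:
  assumes "pure_state n \<psi>"
  shows "(\<Sum>x\<in>bits {1..n}. \<psi> x * cnj (\<psi> x)) = 1"
proof -
  have "complex_of_real (\<Sum>x\<in>bits {1..n}. (cmod (\<psi> x))\<^sup>2) = 1"
    using assms unfolding pure_state_def by simp
  then show ?thesis
    unfolding of_real_sum complex_norm_square .
qed

definition sic_trace :: "nat \<Rightarrow> ((nat \<Rightarrow> nat) \<Rightarrow> complex) \<Rightarrow> (nat \<Rightarrow> nat \<Rightarrow> complex)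
    \<Rightarrow> nat set \<Rightarrow> (nat \<Rightarrow> nat) \<Rightarrow> complex" where
  "sic_trace n \<psi> \<phi> S q = (\<Sum>x\<in>bits {1..n}. \<Sum>y\<in>bits {1..n}.
      (\<psi> x * cnj (\<psi> y)) *
      ((\<Prod>i\<in>S. povm_elem \<phi> (q i) (y i) (x i)) *
       (if \<forall>i\<in>{1..n} - S. y i = x i then 1 else 0)))"

lemma sic_prob_eq_Re_sic_trace: "sic_prob n \<psi> \<phi> S q = Re (sic_trace n \<psi> \<phi> S q)"
  unfolding sic_prob_def sic_trace_def ..

text \<open>The amplitude \<open>\<langle>\<phi>\<^sub>q \<otimes> c|\<psi>\<rangle>\<close> of the SIC outcome \<open>q\<close> (with the
  subnormalised vectors \<open>\<phi>/\<surd>2\<close>) and the basis label \<open>c\<close> of the unmeasured qubits.\<close>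

definition outcome_amp :: "nat \<Rightarrow> ((nat \<Rightarrow> nat) \<Rightarrow> complex) \<Rightarrow> (nat \<Rightarrow> nat \<Rightarrow> complex)
    \<Rightarrow> nat set \<Rightarrow> (nat \<Rightarrow> nat) \<Rightarrow> (nat \<Rightarrow> nat) \<Rightarrow> complex" where
  "outcome_amp n \<psi> \<phi> S q c = (\<Sum>x\<in>bits {1..n}. if restrict x ({1..n} - S) = c
     then \<psi> x * (\<Prod>i\<in>S. cnj (\<phi> (q i) (x i) / complex_of_real (sqrt 2))) else 0)"

lemma indicator_eq_on_as_sum:
  assumes "x \<in> bits U" "R \<subseteq> U" "finite U"
  shows "(if \<forall>i\<in>R. y i = x i then 1 else 0 :: 'a :: comm_semiring_1) =
    (\<Sum>c\<in>bits R. (if restrict x R = c then 1 else 0) * (if restrict y R = c then 1 else 0))"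
proof -
  have "(\<Sum>c\<in>bits R. (if restrict x R = c then 1 else 0) * (if restrict y R = c then 1 else 0))
      = (\<Sum>c\<in>bits R. if restrict x R = c then (if restrict y R = restrict x R then 1 else 0) else (0::'a))"
    by (intro sum.cong refl) auto
  also have "\<dots> = (if restrict y R = restrict x R then 1 else 0)"
    using restrict_in_bits[OF assms(1,2)] assms(2,3) by (simp add: finite_subset)
  also have "(restrict y R = restrict x R) = (\<forall>i\<in>R. y i = x i)"
    by (metis restrict_apply' restrict_ext)
  finally show ?thesis ..
qed

lemma sic_trace_eq_sum_amp:
  assumes "S \<subseteq> {1..n}"
  shows "sic_trace n \<psi> \<phi> S q
    = (\<Sum>c\<in>bits ({1..n} - S). outcome_amp n \<psi> \<phi> S q c * cnj (outcome_amp n \<psi> \<phi> S q c))"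
proof -
  define X where "X = bits {1..n}"
  define R where "R = {1..n} - S"
  define v where "v x = \<psi> x * (\<Prod>i\<in>S. cnj (\<phi> (q i) (x i) / complex_of_real (sqrt 2)))" for x
  define e where "e x c = (if restrict x R = c then 1 else (0::complex))" for x c :: "nat \<Rightarrow> nat"
  have "sic_trace n \<psi> \<phi> S q = (\<Sum>x\<in>X. \<Sum>y\<in>X. \<Sum>c\<in>bits R. (e x c * v x) * cnj (e y c * v y))"
    unfolding sic_trace_def X_def[symmetric] R_def[symmetric]
  proof (intro sum.cong refl)
    fix x y assume "x \<in> X" "y \<in> X"
    have "\<psi> x * cnj (\<psi> y) * (\<Prod>i\<in>S. povm_elem \<phi> (q i) (y i) (x i)) = v x * cnj (v y)"
      unfolding v_def povm_elem_def prod.distrib cnj_prod complex_cnj_mult complex_cnj_cnj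
      by (simp add: mult_ac)
    moreover have "(if \<forall>i\<in>R. y i = x i then 1 else 0) = (\<Sum>c\<in>bits R. e x c * cnj (e y c))"
      using \<open>x \<in> X\<close> unfolding X_def R_def e_def
      by (subst indicator_eq_on_as_sum[of x "{1..n}"]) (auto intro!: sum.cong)
    ultimately have "\<psi> x * cnj (\<psi> y) * ((\<Prod>i\<in>S. povm_elem \<phi> (q i) (y i) (x i)) *
        (if \<forall>i\<in>R. y i = x i then 1 else 0)) = v x * cnj (v y) * (\<Sum>c\<in>bits R. e x c * cnj (e y c))"
      by (simp only: mult.assoc[symmetric])
    also have "\<dots> = (\<Sum>c\<in>bits R. (e x c * v x) * cnj (e y c * v y))"
      unfolding sum_distrib_left by (simp add: mult_ac)
    finally show "\<psi> x * cnj (\<psi> y) * ((\<Prod>i\<in>S. povm_elem \<phi> (q i) (y i) (x i)) *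
        (if \<forall>i\<in>R. y i = x i then 1 else 0)) = (\<Sum>c\<in>bits R. (e x c * v x) * cnj (e y c * v y))" .
  qed
  also have "\<dots> = (\<Sum>c\<in>bits R. (\<Sum>x\<in>X. e x c * v x) * cnj (\<Sum>y\<in>X. e y c * v y))"
    unfolding cnj_sum sum_product by (subst sum.swap, subst (2) sum.swap) (rule refl)
  also have "\<dots> = (\<Sum>c\<in>bits R. outcome_amp n \<psi> \<phi> S q c * cnj (outcome_amp n \<psi> \<phi> S q c))"
    unfolding outcome_amp_def X_def R_def e_def v_def cnj_sum
    by (intro sum.cong refl arg_cong2[where f = "(*)"]) simp_all
  finally show ?thesis
    unfolding R_def .
qed

lemma sic_prob_eq_sum_amp:
  assumes "S \<subseteq> {1..n}"
  shows "sic_prob n \<psi> \<phi> S q = (\<Sum>c\<in>bits ({1..n} - S). (cmod (outcome_amp n \<psi> \<phi> S q c))\<^sup>2)"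
  unfolding sic_prob_eq_Re_sic_trace sic_trace_eq_sum_amp[OF assms] complex_norm_square[symmetric]
    of_real_sum[symmetric] Re_complex_of_real ..

lemma sic_trace_real:
  assumes "S \<subseteq> {1..n}"
  shows "sic_trace n \<psi> \<phi> S q = complex_of_real (sic_prob n \<psi> \<phi> S q)"
  unfolding sic_prob_eq_sum_amp[OF assms] sic_trace_eq_sum_amp[OF assms] of_real_sum
    complex_norm_square ..

lemma sic_prob_nonneg:
  assumes "S \<subseteq> {1..n}"
  shows "0 \<le> sic_prob n \<psi> \<phi> S q"
  unfolding sic_prob_eq_sum_amp[OF assms] by (simp add: sum_nonneg)

lemma sum_sic_prob:
  assumes "pure_state n \<psi>" "sic \<phi>" "S \<subseteq> {1..n}"
  shows "(\<Sum>q\<in>S \<rightarrow>\<^sub>E {1..4}. sic_prob n \<psi> \<phi> S q) = 1"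
proof -
  define U where "U = {1..n}"
  define X where "X = bits U"
  have "finite S"
    using assms(3) finite_subset by blast
  have "(\<Sum>q\<in>S \<rightarrow>\<^sub>E {1..4}. sic_trace n \<psi> \<phi> S q) =
    (\<Sum>x\<in>X. \<Sum>y\<in>X. (\<psi> x * cnj (\<psi> y)) * ((\<Sum>q\<in>S \<rightarrow>\<^sub>E {1..4}. \<Prod>i\<in>S. povm_elem \<phi> (q i) (y i) (x i))
      * (if \<forall>i\<in>U - S. y i = x i then 1 else 0)))"
    unfolding sic_trace_def X_def U_def sum_distrib_left sum_distrib_right
    by (subst sum.swap, rule sum.cong[OF refl], subst sum.swap) (simp add: mult_ac)
  also have "\<dots> = (\<Sum>x\<in>X. \<Sum>y\<in>X. (\<psi> x * cnj (\<psi> y)) * (if y = x then 1 else 0))"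
  proof (intro sum.cong refl arg_cong2[where f = "(*)"])
    fix x y assume x: "x \<in> X" and y: "y \<in> X"
    have "(\<Sum>q\<in>S \<rightarrow>\<^sub>E {1..4}. \<Prod>i\<in>S. povm_elem \<phi> (q i) (y i) (x i))
        = (\<Prod>i\<in>S. \<Sum>j\<in>{1..4}. povm_elem \<phi> j (y i) (x i))"
      by (rule prod_sum_PiE[symmetric]) (auto simp: \<open>finite S\<close>)
    also have "\<dots> = (\<Prod>i\<in>S. if y i = x i then 1 else 0)"
      using x y assms(3) unfolding X_def U_def
      by (intro prod.cong refl sic_povm_sum[OF assms(2)]; meson bits_range subsetD)
    also have "\<dots> = (if \<forall>i\<in>S. y i = x i then 1 else 0)"
      using \<open>finite S\<close> by (rule prod_indicator)
    finally show "(\<Sum>q\<in>S \<rightarrow>\<^sub>E {1..4}. \<Prod>i\<in>S. povm_elem \<phi> (q i) (y i) (x i)) *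
        (if \<forall>i\<in>U - S. y i = x i then 1 else 0) = (if y = x then 1 else 0)"
      using x y bits_eqI[of y U x] unfolding X_def by auto
  qed
  also have "\<dots> = 1"
    using pure_state_sum[OF assms(1)] unfolding X_def U_def by (simp add: if_distrib cong: if_cong)
  finally have "(\<Sum>q\<in>S \<rightarrow>\<^sub>E {1..4}. sic_trace n \<psi> \<phi> S q) = 1" .
  then show ?thesis
    unfolding sic_prob_eq_Re_sic_trace Re_sum[symmetric] by simp
qed

lemma sum_fiber_sic_weight:
  assumes "sic \<phi>" "S \<subseteq> U" "finite U" "q \<in> S \<rightarrow>\<^sub>E {1..4}" "c \<in> bits (U - S)"
  shows "(\<Sum>x\<in>bits U. if restrict x (U - S) = c then (\<Prod>i\<in>S. (cmod (\<phi> (q i) (x i)))\<^sup>2 / 2) else 0)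
    = (1/2) ^ card S"
proof -
  have "finite S"
    using assms(2,3) by (rule finite_subset)
  have restrict_merge: "restrict (merge S a c') (U - S) = c'" if "c' \<in> bits (U - S)" for a c'
    using that unfolding bits_def merge_def by (auto simp: fun_eq_iff PiE_iff extensional_def)
  have "(\<Sum>x\<in>bits U. if restrict x (U - S) = c then (\<Prod>i\<in>S. (cmod (\<phi> (q i) (x i)))\<^sup>2 / 2) else 0)
    = (\<Sum>a\<in>bits S. \<Sum>c'\<in>bits (U - S). if c' = c then (\<Prod>i\<in>S. (cmod (\<phi> (q i) (a i)))\<^sup>2 / 2) else 0)"
    unfolding sum_bits_merge[OF assms(2)]
    by (intro sum.cong refl) (simp only: restrict_merge, simp add: merge_def cong: prod.cong_simp)
  also have "\<dots> = (\<Sum>a\<in>bits S. \<Prod>i\<in>S. (cmod (\<phi> (q i) (a i)))\<^sup>2 / 2)"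
    using assms(3,5) by simp
  also have "\<dots> = (\<Prod>i\<in>S. \<Sum>b\<in>{0,1}. (cmod (\<phi> (q i) b))\<^sup>2 / 2)"
    unfolding bits_def using \<open>finite S\<close> by (rule prod_sum_PiE[symmetric]) simp
  also have "\<dots> = (\<Prod>i\<in>S. 1/2)"
  proof (intro prod.cong refl)
    fix i assume "i \<in> S"
    then have "(\<Sum>b\<in>{0::nat,1}. (cmod (\<phi> (q i) b))\<^sup>2) = 1"
      using assms(1,4) unfolding sic_def by auto
    then show "(\<Sum>b\<in>{0,1}. (cmod (\<phi> (q i) b))\<^sup>2 / 2) = 1/2"
      by (simp add: add_divide_distrib[symmetric])
  qed
  finally show ?thesis
    by simp
qed

lemma norm_outcome_amp_le:
  assumes "sic \<phi>" "S \<subseteq> {1..n}" "q \<in> S \<rightarrow>\<^sub>E {1..4}" "c \<in> bits ({1..n} - S)"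
  shows "(cmod (outcome_amp n \<psi> \<phi> S q c))\<^sup>2
    \<le> (\<Sum>x\<in>bits {1..n}. if restrict x ({1..n} - S) = c then (cmod (\<psi> x))\<^sup>2 else 0) * (1/2) ^ card S"
proof -
  define X where "X = bits {1..n}"
  define R where "R = {1..n} - S"
  define fiber where "fiber f x = (if restrict x R = c then f x else 0)" for f :: "(nat \<Rightarrow> nat) \<Rightarrow> real" and x
  define G where "G x = cmod (\<Prod>i\<in>S. cnj (\<phi> (q i) (x i) / complex_of_real (sqrt 2)))" for x
  have "cmod (outcome_amp n \<psi> \<phi> S q c) \<le> (\<Sum>x\<in>X. fiber (\<lambda>x. cmod (\<psi> x)) x * fiber G x)"
    unfolding outcome_amp_def X_def[symmetric] R_def[symmetric]
    by (rule order_trans[OF norm_sum], rule sum_mono) (simp add: fiber_def G_def norm_mult)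
  then have "(cmod (outcome_amp n \<psi> \<phi> S q c))\<^sup>2 \<le> (\<Sum>x\<in>X. fiber (\<lambda>x. cmod (\<psi> x)) x * fiber G x)\<^sup>2"
    by (rule power_mono) simp
  also have "\<dots> \<le> (\<Sum>x\<in>X. (fiber (\<lambda>x. cmod (\<psi> x)) x)\<^sup>2) * (\<Sum>x\<in>X. (fiber G x)\<^sup>2)"
    by (rule Cauchy_Schwarz_ineq_sum)
  also have "(\<Sum>x\<in>X. (fiber G x)\<^sup>2) = (1/2) ^ card S"
  proof -
    have "(G x)\<^sup>2 = (\<Prod>i\<in>S. (cmod (\<phi> (q i) (x i)))\<^sup>2 / 2)" for x
      unfolding G_def prod_norm[symmetric] prod_power_distrib
      by (intro prod.cong refl) (simp add: norm_divide power_divide)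
    then have "(\<Sum>x\<in>X. (fiber G x)\<^sup>2)
        = (\<Sum>x\<in>X. if restrict x R = c then (\<Prod>i\<in>S. (cmod (\<phi> (q i) (x i)))\<^sup>2 / 2) else 0)"
      unfolding fiber_def by (intro sum.cong refl) simp
    also have "\<dots> = (1/2) ^ card S"
      using assms unfolding X_def R_def by (intro sum_fiber_sic_weight) auto
    finally show ?thesis .
  qed
  also have "(\<Sum>x\<in>X. (fiber (\<lambda>x. cmod (\<psi> x)) x)\<^sup>2) = (\<Sum>x\<in>X. fiber (\<lambda>x. (cmod (\<psi> x))\<^sup>2) x)"
    unfolding fiber_def by (intro sum.cong refl) simp
  finally show ?thesis
    unfolding fiber_def X_def R_def .
qed

lemma sic_prob_le:
  assumes "pure_state n \<psi>" "sic \<phi>" "S \<subseteq> {1..n}" "q \<in> S \<rightarrow>\<^sub>E {1..4}"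
  shows "sic_prob n \<psi> \<phi> S q \<le> (1/2) ^ card S"
proof -
  define X where "X = bits {1..n}"
  define R where "R = {1..n} - S"
  have "sic_prob n \<psi> \<phi> S q
      \<le> (\<Sum>c\<in>bits R. (\<Sum>x\<in>X. if restrict x R = c then (cmod (\<psi> x))\<^sup>2 else 0) * (1/2) ^ card S)"
    unfolding sic_prob_eq_sum_amp[OF assms(3)] X_def R_def by (intro sum_mono norm_outcome_amp_le assms(2-4))
  also have "\<dots> = (\<Sum>x\<in>X. \<Sum>c\<in>bits R. if restrict x R = c then (cmod (\<psi> x))\<^sup>2 else 0) * (1/2) ^ card S"
    unfolding sum_distrib_right[symmetric] by (subst sum.swap) (rule refl)
  also have "(\<Sum>x\<in>X. \<Sum>c\<in>bits R. if restrict x R = c then (cmod (\<psi> x))\<^sup>2 else 0) = (\<Sum>x\<in>X. (cmod (\<psi> x))\<^sup>2)"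
  proof (intro sum.cong refl)
    fix x assume "x \<in> X"
    then have "restrict x R \<in> bits R"
      unfolding X_def R_def by (rule restrict_in_bits) auto
    then show "(\<Sum>c\<in>bits R. if restrict x R = c then (cmod (\<psi> x))\<^sup>2 else 0) = (cmod (\<psi> x))\<^sup>2"
      unfolding R_def by simp
  qed
  also have "\<dots> = 1"
    using assms(1) unfolding pure_state_def X_def .
  finally show ?thesis
    by simp
qed

lemma merge_eq_iff:
  assumes "x \<in> bits U" "x' \<in> bits U" "y \<in> bits U" "y' \<in> bits U" "\<alpha> \<subseteq> U"
  shows "(y = merge \<alpha> x' x \<and> y' = merge \<alpha> x x') \<longleftrightarrow>
    (\<forall>i\<in>\<alpha>. y i = x' i \<and> y' i = x i) \<and> (\<forall>i\<in>U - \<alpha>. y i = x i \<and> y' i = x' i)"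
proof
  assume "(\<forall>i\<in>\<alpha>. y i = x' i \<and> y' i = x i) \<and> (\<forall>i\<in>U - \<alpha>. y i = x i \<and> y' i = x' i)"
  note H = this
  have "y = merge \<alpha> x' x"
  proof (rule bits_eqI[OF assms(3) merge_in_bits[OF assms(1,2,5)]])
    show "y i = merge \<alpha> x' x i" if "i \<in> U" for i
      using H that by (cases "i \<in> \<alpha>") (auto simp: merge_def)
  qed
  moreover have "y' = merge \<alpha> x x'"
  proof (rule bits_eqI[OF assms(4) merge_in_bits[OF assms(2,1,5)]])
    show "y' i = merge \<alpha> x x' i" if "i \<in> U" for i
      using H that by (cases "i \<in> \<alpha>") (auto simp: merge_def)
  qed
  ultimately show "y = merge \<alpha> x' x \<and> y' = merge \<alpha> x x'" ..
qed (auto simp: merge_def)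

lemma sum_sic_povm_pair_prod:
  assumes "sic \<phi>" "S \<subseteq> U" "finite U"
    and bits: "x \<in> bits U" "x' \<in> bits U" "y \<in> bits U" "y' \<in> bits U"
  shows "(\<Sum>q\<in>S \<rightarrow>\<^sub>E {1..4}. \<Prod>i\<in>S. povm_elem \<phi> (q i) (y i) (x i) * povm_elem \<phi> (q i) (y' i) (x' i))
      * (if \<forall>i\<in>U - S. y i = x i \<and> y' i = x' i then 1 else 0)
    = (1/6) ^ card S * (\<Sum>\<alpha>\<in>Pow S. if y = merge \<alpha> x' x \<and> y' = merge \<alpha> x x' then 1 else 0)"
proof -
  have "finite S"
    using assms(2,3) by (rule finite_subset)
  define swap where "swap i = (if y i = x' i \<and> y' i = x i then 1 else 0 :: complex)" for i
  define keep where "keep i = (if y i = x i \<and> y' i = x' i then 1 else 0 :: complex)" for i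
  have "(\<Sum>q\<in>S \<rightarrow>\<^sub>E {1..4}. \<Prod>i\<in>S. povm_elem \<phi> (q i) (y i) (x i) * povm_elem \<phi> (q i) (y' i) (x' i))
      = (\<Prod>i\<in>S. \<Sum>j\<in>{1..4}. povm_elem \<phi> j (y i) (x i) * povm_elem \<phi> j (y' i) (x' i))"
    by (rule prod_sum_PiE[symmetric]) (auto simp: \<open>finite S\<close>)
  also have "\<dots> = (\<Prod>i\<in>S. 1/6 * (swap i + keep i))"
  proof (intro prod.cong refl)
    fix i assume "i \<in> S"
    then have "y i \<in> {0,1}" "x i \<in> {0,1}" "y' i \<in> {0,1}" "x' i \<in> {0,1}"
      using assms(2) bits by (meson bits_range subsetD)+
    show "(\<Sum>j\<in>{1..4}. povm_elem \<phi> j (y i) (x i) * povm_elem \<phi> j (y' i) (x' i))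
        = 1/6 * (swap i + keep i)"
    proof -
      have "(\<Sum>j\<in>{1..4}. povm_elem \<phi> j (y i) (x i) * povm_elem \<phi> j (y' i) (x' i))
          = 1/6 * (keep i + swap i)"
        unfolding keep_def swap_def by (rule sic_povm_pair_sum[OF assms(1) \<open>y i \<in> {0,1}\<close>
            \<open>x i \<in> {0,1}\<close> \<open>y' i \<in> {0,1}\<close> \<open>x' i \<in> {0,1}\<close>])
      then show ?thesis
        by (simp only: add.commute)
    qed
  qed
  also have "\<dots> = (1/6) ^ card S * (\<Sum>\<alpha>\<in>Pow S. (\<Prod>i\<in>\<alpha>. swap i) * (\<Prod>i\<in>S - \<alpha>. keep i))"
    unfolding prod.distrib prod_constant prod_add[OF \<open>finite S\<close>] ..
  finally have pair_sum: "(\<Sum>q\<in>S \<rightarrow>\<^sub>E {1..4}. \<Prod>i\<in>S. povm_elem \<phi> (q i) (y i) (x i) * povm_elem \<phi> (q i) (y' i) (x' i))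
      = (1/6) ^ card S * (\<Sum>\<alpha>\<in>Pow S. (\<Prod>i\<in>\<alpha>. swap i) * (\<Prod>i\<in>S - \<alpha>. keep i))" .
  have "(\<Prod>i\<in>\<alpha>. swap i) * (\<Prod>i\<in>S - \<alpha>. keep i) * (if \<forall>i\<in>U - S. y i = x i \<and> y' i = x' i then 1 else 0)
      = (if y = merge \<alpha> x' x \<and> y' = merge \<alpha> x x' then 1 else 0)" if "\<alpha> \<subseteq> S" for \<alpha>
  proof -
    have "finite \<alpha>"
      using that \<open>finite S\<close> by (rule finite_subset)
    have "U - \<alpha> = (S - \<alpha>) \<union> (U - S)"
      using that assms(2) by blast
    then have "(\<forall>i\<in>U - \<alpha>. y i = x i \<and> y' i = x' i)
        \<longleftrightarrow> (\<forall>i\<in>S - \<alpha>. y i = x i \<and> y' i = x' i) \<and> (\<forall>i\<in>U - S. y i = x i \<and> y' i = x' i)"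
      by blast
    then show ?thesis
      unfolding merge_eq_iff[OF bits(1-4) order_trans[OF that assms(2)]] swap_def keep_def
        prod_indicator[OF \<open>finite \<alpha>\<close>] prod_indicator[OF finite_Diff[OF \<open>finite S\<close>]]
      by simp
  qed
  then show ?thesis
    unfolding pair_sum sum_distrib_right mult.assoc by (intro arg_cong2[where f = "(*)"] sum.cong) auto
qed

text \<open>\<open>swap_trace n \<psi> \<alpha>\<close> is \<open>tr ((\<rho> \<otimes> \<rho>) SWAP\<^sub>\<alpha>)\<close>, which by the swap trick equals
  \<open>tr \<rho>\<^sub>\<alpha>\<^sup>2\<close>.\<close>

definition swap_trace :: "nat \<Rightarrow> ((nat \<Rightarrow> nat) \<Rightarrow> complex) \<Rightarrow> nat set \<Rightarrow> complex" where
  "swap_trace n \<psi> \<alpha> = (\<Sum>x\<in>bits {1..n}. \<Sum>x'\<in>bits {1..n}.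
     \<psi> x * \<psi> x' * cnj (\<psi> (merge \<alpha> x' x)) * cnj (\<psi> (merge \<alpha> x x')))"

lemma sum_sic_trace_squared:
  assumes "sic \<phi>" "S \<subseteq> {1..n}"
  shows "(\<Sum>q\<in>S \<rightarrow>\<^sub>E {1..4}. (sic_trace n \<psi> \<phi> S q)\<^sup>2) = (1/6) ^ card S * (\<Sum>\<alpha>\<in>Pow S. swap_trace n \<psi> \<alpha>)"
proof -
  define U where "U = {1..n}"
  define X where "X = bits U"
  define A where "A = S \<rightarrow>\<^sub>E {1..4::nat}"
  define c where "c x x' y y' = \<psi> x * \<psi> x' * cnj (\<psi> y) * cnj (\<psi> y')" for x x' y y'
  define T where "T q x x' y y' = (\<Prod>i\<in>S. povm_elem \<phi> (q i) (y i) (x i) * povm_elem \<phi> (q i) (y' i) (x' i))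
    * (if \<forall>i\<in>U - S. y i = x i \<and> y' i = x' i then 1 else 0)" for q x x' y y'
  define \<delta> where "\<delta> \<alpha> x x' y y' = (if y = merge \<alpha> x' x \<and> y' = merge \<alpha> x x' then 1 else (0::complex))"
    for \<alpha> x x' y y'
  have "finite X"
    unfolding X_def U_def by simp
  have "(\<Sum>q\<in>A. (sic_trace n \<psi> \<phi> S q)\<^sup>2) = (\<Sum>q\<in>A. \<Sum>x\<in>X. \<Sum>x'\<in>X. \<Sum>y\<in>X. \<Sum>y'\<in>X. c x x' y y' * T q x x' y y')"
    unfolding power2_eq_square sic_trace_def U_def[symmetric] X_def[symmetric] sum_product
    by (intro sum.cong refl) (simp add: c_def T_def prod.distrib ball_conj_distrib mult_ac)
  also have "\<dots> = (\<Sum>x\<in>X. \<Sum>x'\<in>X. \<Sum>y\<in>X. \<Sum>y'\<in>X. c x x' y y' * (\<Sum>q\<in>A. T q x x' y y'))"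
    by (simp only: sum.swap[where A = A] sum_distrib_left)
  also have "\<dots> = (\<Sum>x\<in>X. \<Sum>x'\<in>X. \<Sum>y\<in>X. \<Sum>y'\<in>X. c x x' y y' * ((1/6) ^ card S * (\<Sum>\<alpha>\<in>Pow S. \<delta> \<alpha> x x' y y')))"
    using assms unfolding T_def A_def \<delta>_def X_def U_def sum_distrib_right[symmetric]
    by (intro sum.cong refl arg_cong2[where f = "(*)"] sum_sic_povm_pair_prod) auto
  also have "\<dots> = (1/6) ^ card S * (\<Sum>\<alpha>\<in>Pow S. \<Sum>x\<in>X. \<Sum>x'\<in>X. \<Sum>y\<in>X. \<Sum>y'\<in>X. c x x' y y' * \<delta> \<alpha> x x' y y')"
    unfolding sum_distrib_left by (simp only: sum.swap[where B = "Pow S"] mult_ac)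
  also have "\<dots> = (1/6) ^ card S * (\<Sum>\<alpha>\<in>Pow S. swap_trace n \<psi> \<alpha>)"
  proof (intro arg_cong2[where f = "(*)"] sum.cong refl)
    fix \<alpha> assume "\<alpha> \<in> Pow S"
    then have "\<alpha> \<subseteq> U"
      using assms(2) unfolding U_def by blast
    have "(\<Sum>y\<in>X. \<Sum>y'\<in>X. c x x' y y' * \<delta> \<alpha> x x' y y') = c x x' (merge \<alpha> x' x) (merge \<alpha> x x')"
      if "x \<in> X" "x' \<in> X" for x x'
    proof -
      have "merge \<alpha> x' x \<in> X" "merge \<alpha> x x' \<in> X"
        using that \<open>\<alpha> \<subseteq> U\<close> unfolding X_def by (auto intro: merge_in_bits)
      have "(\<Sum>y\<in>X. \<Sum>y'\<in>X. c x x' y y' * \<delta> \<alpha> x x' y y') = (\<Sum>y\<in>X. if y = merge \<alpha> x' x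
          then (\<Sum>y'\<in>X. if y' = merge \<alpha> x x' then c x x' y y' else 0) else 0)"
        unfolding \<delta>_def by (intro sum.cong refl) (simp add: if_distrib cong: if_cong)
      also have "\<dots> = c x x' (merge \<alpha> x' x) (merge \<alpha> x x')"
        using \<open>finite X\<close> \<open>merge \<alpha> x' x \<in> X\<close> \<open>merge \<alpha> x x' \<in> X\<close> by simp
      finally show ?thesis .
    qed
    then show "(\<Sum>x\<in>X. \<Sum>x'\<in>X. \<Sum>y\<in>X. \<Sum>y'\<in>X. c x x' y y' * \<delta> \<alpha> x x' y y') = swap_trace n \<psi> \<alpha>"
      unfolding swap_trace_def U_def[symmetric] X_def[symmetric] c_def by simp
  qed
  finally show ?thesis
    unfolding A_def .
qed

lemma purity_eq_Re_swap_trace: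
  assumes "pure_state n \<psi>" "\<alpha> \<subseteq> {1..n}"
  shows "purity n \<psi> \<alpha> = Re (swap_trace n \<psi> \<alpha>)"
proof (cases "\<alpha> = {}")
  case True
  have "merge {} a c = c" for a c
    unfolding merge_def by simp
  then have "swap_trace n \<psi> \<alpha> = (\<Sum>x\<in>bits {1..n}. \<psi> x * cnj (\<psi> x)) * (\<Sum>x\<in>bits {1..n}. \<psi> x * cnj (\<psi> x))"
    unfolding swap_trace_def True sum_product by (simp add: mult_ac)
  then show ?thesis
    unfolding pure_state_sum[OF assms(1)] purity_def using True by simp
next
  case False
  define A where "A = bits \<alpha>"
  define C where "C = bits ({1..n} - \<alpha>)"
  have merge_merge: "merge \<alpha> (merge \<alpha> a b) (merge \<alpha> c d) = merge \<alpha> a d" for a b c d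
    unfolding merge_def by auto
  have "swap_trace n \<psi> \<alpha> = (\<Sum>a\<in>A. \<Sum>c\<in>C. \<Sum>a'\<in>A. \<Sum>c'\<in>C.
        \<psi> (merge \<alpha> a c) * \<psi> (merge \<alpha> a' c') * cnj (\<psi> (merge \<alpha> a' c)) * cnj (\<psi> (merge \<alpha> a c')))"
    unfolding swap_trace_def sum_bits_merge[OF assms(2)] merge_merge A_def C_def ..
  also have "\<dots> = (\<Sum>a\<in>A. \<Sum>a'\<in>A. \<Sum>c\<in>C. \<Sum>c'\<in>C.
        \<psi> (merge \<alpha> a c) * \<psi> (merge \<alpha> a' c') * cnj (\<psi> (merge \<alpha> a' c)) * cnj (\<psi> (merge \<alpha> a c')))"
    by (rule sum.cong[OF refl], rule sum.swap)
  also have "\<dots> = (\<Sum>a\<in>A. \<Sum>a'\<in>A. reduced n \<psi> \<alpha> a a' * reduced n \<psi> \<alpha> a' a)"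
    unfolding reduced_def C_def[symmetric] sum_product by (intro sum.cong refl) (simp add: mult_ac)
  finally show ?thesis
    unfolding purity_def A_def using False by simp
qed

lemma sum_bits_pairs_merge:
  assumes "\<alpha> \<subseteq> U"
  shows "(\<Sum>x\<in>bits U. \<Sum>x'\<in>bits U. f (merge \<alpha> x' x) (merge \<alpha> x x')) = (\<Sum>x\<in>bits U. \<Sum>x'\<in>bits U. f x x')"
proof -
  have "(\<Sum>(x, x')\<in>bits U \<times> bits U. f (merge \<alpha> x' x) (merge \<alpha> x x')) = (\<Sum>(x, x')\<in>bits U \<times> bits U. f x x')"
    \<comment> \<open>exchanging the \<open>\<alpha>\<close>-parts of \<open>x\<close> and \<open>x'\<close> is an involution\<close>
    by (rule sum.reindex_bij_witness[where i = "\<lambda>(x, x'). (merge \<alpha> x' x, merge \<alpha> x x')"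
          and j = "\<lambda>(x, x'). (merge \<alpha> x' x, merge \<alpha> x x')"])
       (auto simp: merge_def assms merge_in_bits[simplified merge_def])
  then show ?thesis
    by (simp add: sum.cartesian_product)
qed

lemma norm_swap_trace_le:
  assumes "pure_state n \<psi>" "\<alpha> \<subseteq> {1..n}"
  shows "cmod (swap_trace n \<psi> \<alpha>) \<le> 1"
proof -
  define X where "X = bits {1..n}"
  define N where "N x = (cmod (\<psi> x))\<^sup>2" for x
  have amgm: "cmod (\<psi> x * \<psi> x' * cnj (\<psi> (merge \<alpha> x' x)) * cnj (\<psi> (merge \<alpha> x x')))
     \<le> (N x * N x' + N (merge \<alpha> x' x) * N (merge \<alpha> x x')) / 2" for x x'
    using sum_squares_bound[of "cmod (\<psi> x) * cmod (\<psi> x')" "cmod (\<psi> (merge \<alpha> x' x)) * cmod (\<psi> (merge \<alpha> x x'))"]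
    by (simp add: N_def norm_mult power_mult_distrib field_simps)
  have "cmod (swap_trace n \<psi> \<alpha>)
      \<le> (\<Sum>x\<in>X. \<Sum>x'\<in>X. cmod (\<psi> x * \<psi> x' * cnj (\<psi> (merge \<alpha> x' x)) * cnj (\<psi> (merge \<alpha> x x'))))"
    unfolding swap_trace_def X_def[symmetric] by (rule order_trans[OF norm_sum sum_mono[OF norm_sum]])
  also have "\<dots> \<le> (\<Sum>x\<in>X. \<Sum>x'\<in>X. (N x * N x' + N (merge \<alpha> x' x) * N (merge \<alpha> x x')) / 2)"
    by (intro sum_mono amgm)
  also have "\<dots> = ((\<Sum>x\<in>X. \<Sum>x'\<in>X. N x * N x') + (\<Sum>x\<in>X. \<Sum>x'\<in>X. N (merge \<alpha> x' x) * N (merge \<alpha> x x'))) / 2"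
    by (simp only: sum.distrib sum_divide_distrib[symmetric] add_divide_distrib)
  also have "\<dots> = (\<Sum>x\<in>X. N x) * (\<Sum>x\<in>X. N x)"
    using sum_bits_pairs_merge[OF assms(2), of "\<lambda>a b. N a * N b"]
    unfolding X_def sum_product by simp
  also have "\<dots> = 1"
    using assms(1) unfolding pure_state_def N_def X_def by simp
  finally show ?thesis .
qed

lemma sum_sic_prob_squared:
  assumes "pure_state n \<psi>" "sic \<phi>" "S \<subseteq> {1..n}"
  shows "(\<Sum>q\<in>S \<rightarrow>\<^sub>E {1..4}. (sic_prob n \<psi> \<phi> S q)\<^sup>2) = (1/6) ^ card S * (\<Sum>\<alpha>\<in>Pow S. purity n \<psi> \<alpha>)"
proof -
  have "complex_of_real (\<Sum>q\<in>S \<rightarrow>\<^sub>E {1..4}. (sic_prob n \<psi> \<phi> S q)\<^sup>2)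
      = (\<Sum>q\<in>S \<rightarrow>\<^sub>E {1..4}. (sic_trace n \<psi> \<phi> S q)\<^sup>2)"
    by (simp add: sic_trace_real[OF assms(3)])
  also have "\<dots> = complex_of_real ((1/6) ^ card S) * (\<Sum>\<alpha>\<in>Pow S. swap_trace n \<psi> \<alpha>)"
    unfolding sum_sic_trace_squared[OF assms(2,3)] by simp
  finally have "(\<Sum>q\<in>S \<rightarrow>\<^sub>E {1..4}. (sic_prob n \<psi> \<phi> S q)\<^sup>2)
      = Re (complex_of_real ((1/6) ^ card S) * (\<Sum>\<alpha>\<in>Pow S. swap_trace n \<psi> \<alpha>))"
    by (metis Re_complex_of_real)
  also have "\<dots> = (1/6) ^ card S * (\<Sum>\<alpha>\<in>Pow S. Re (swap_trace n \<psi> \<alpha>))"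
    by (simp add: Re_sum)
  also have "(\<Sum>\<alpha>\<in>Pow S. Re (swap_trace n \<psi> \<alpha>)) = (\<Sum>\<alpha>\<in>Pow S. purity n \<psi> \<alpha>)"
    using assms(3) by (intro sum.cong refl purity_eq_Re_swap_trace[OF assms(1), symmetric]) auto
  finally show ?thesis .
qed

lemma conc_ent_eq_sic_collision:
  assumes "pure_state n \<psi>" "sic \<phi>" "S \<subseteq> {1..n}"
  shows "conc_ent n \<psi> S = 1 - 3 ^ card S * (\<Sum>q\<in>S \<rightarrow>\<^sub>E {1..4}. (sic_prob n \<psi> \<phi> S q)\<^sup>2)"
proof -
  have "3 ^ card S * (1/6) ^ card S = (1/2 :: real) ^ card S"
    by (simp flip: power_mult_distrib)
  then show ?thesis
    unfolding conc_ent_def sum_sic_prob_squared[OF assms] mult.assoc[symmetric]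
    by (simp add: power_one_over)
qed

lemma sum_sic_prob_squared_le:
  assumes "pure_state n \<psi>" "sic \<phi>" "S \<subseteq> {1..n}"
  shows "(\<Sum>q\<in>S \<rightarrow>\<^sub>E {1..4}. (sic_prob n \<psi> \<phi> S q)\<^sup>2) \<le> (1/3) ^ card S"
proof -
  have "finite S"
    using assms(3) finite_subset by blast
  have "purity n \<psi> \<alpha> \<le> 1" if "\<alpha> \<in> Pow S" for \<alpha>
  proof -
    have "\<alpha> \<subseteq> {1..n}"
      using that assms(3) by blast
    then show ?thesis
      using purity_eq_Re_swap_trace[OF assms(1)] norm_swap_trace_le[OF assms(1)]
        complex_Re_le_cmod order_trans by metis
  qed
  then have "(\<Sum>\<alpha>\<in>Pow S. purity n \<psi> \<alpha>) \<le> 2 ^ card S"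
    using sum_mono[of "Pow S" "purity n \<psi>" "\<lambda>_. 1"] \<open>finite S\<close> by (simp add: card_Pow)
  then have "(\<Sum>q\<in>S \<rightarrow>\<^sub>E {1..4}. (sic_prob n \<psi> \<phi> S q)\<^sup>2) \<le> (1/6) ^ card S * 2 ^ card S"
    unfolding sum_sic_prob_squared[OF assms] by (intro mult_left_mono) auto
  also have "\<dots> = (1/3) ^ card S"
    by (simp flip: power_mult_distrib)
  finally show ?thesis .
qed

section \<open>Coincidences among independent samples\<close>

definition coincidence_rate :: "'b set \<Rightarrow> ('b \<Rightarrow> 'a) \<Rightarrow> real" where
  "coincidence_rate B Q = (\<Sum>k\<in>B. \<Sum>k'\<in>B. of_bool (k \<noteq> k' \<and> Q k = Q k'))
     / (real (card B) * (real (card B) - 1))"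

lemma sum_of_bool_neq:
  assumes "finite B" "k \<in> B"
  shows "(\<Sum>k'\<in>B. of_bool (k \<noteq> k') :: real) = real (card B) - 1"
proof -
  have "(\<Sum>k'\<in>B. of_bool (k \<noteq> k') :: real) = (\<Sum>k'\<in>B. 1 - of_bool (k = k'))"
    by (intro sum.cong refl) simp
  then show ?thesis
    using assms by (simp add: sum_subtractf of_bool_def)
qed

lemma sum_offdiag:
  assumes "finite B"
  shows "(\<Sum>k\<in>B. \<Sum>k'\<in>B. of_bool (k \<noteq> k') :: real) = real (card B) * (real (card B) - 1)"
proof -
  have "(\<Sum>k\<in>B. \<Sum>k'\<in>B. of_bool (k \<noteq> k') :: real) = (\<Sum>k\<in>B. real (card B) - 1)"
    using assms by (intro sum.cong refl) (rule sum_of_bool_neq)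
  then show ?thesis
    by simp
qed

lemma sum_offdiag_fst:
  assumes "finite B" "k \<in> B"
  shows "(\<Sum>l\<in>B. \<Sum>l'\<in>B. of_bool (l \<noteq> l' \<and> l = k) :: real) = real (card B) - 1"
proof -
  have "(\<Sum>l\<in>B. \<Sum>l'\<in>B. of_bool (l \<noteq> l' \<and> l = k) :: real)
      = (\<Sum>l\<in>B. if l = k then (\<Sum>l'\<in>B. of_bool (k \<noteq> l')) else 0)"
    by (intro sum.cong refl) auto
  also have "\<dots> = (\<Sum>l'\<in>B. of_bool (k \<noteq> l'))"
    by (simp only: sum.delta[OF assms(1)] if_P[OF assms(2)])
  finally show ?thesis
    unfolding sum_of_bool_neq[OF assms] .
qed

lemma sum_offdiag_snd:
  assumes "finite B" "k \<in> B"
  shows "(\<Sum>l\<in>B. \<Sum>l'\<in>B. of_bool (l \<noteq> l' \<and> l' = k) :: real) = real (card B) - 1"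
  using sum_offdiag_fst[OF assms] by (subst sum.swap) (simp add: eq_commute)

lemma sum_offdiag_pair:
  assumes "finite B" "k \<in> B" "k' \<in> B"
  shows "(\<Sum>l\<in>B. \<Sum>l'\<in>B. of_bool (l \<noteq> l' \<and> l = k \<and> l' = k') :: real) = of_bool (k \<noteq> k')"
proof -
  have "(\<Sum>l\<in>B. \<Sum>l'\<in>B. of_bool (l \<noteq> l' \<and> l = k \<and> l' = k') :: real)
      = (\<Sum>l\<in>B. if l = k then (\<Sum>l'\<in>B. if l' = k' then of_bool (k \<noteq> k') else 0) else 0)"
  proof (intro sum.cong refl)
    fix l
    show "(\<Sum>l'\<in>B. of_bool (l \<noteq> l' \<and> l = k \<and> l' = k') :: real)
        = (if l = k then (\<Sum>l'\<in>B. if l' = k' then of_bool (k \<noteq> k') else 0) else 0)"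
      by (cases "l = k") (auto intro!: sum.neutral sum.cong)
  qed
  then show ?thesis
    using assms by simp
qed

lemma prod_one_plus_two_of_bool:
  "finite B \<Longrightarrow> (\<Prod>b\<in>B. 1 + 2 * of_bool (F b) :: real) = 3 ^ card {b \<in> B. F b}"
proof -
  assume "finite B"
  have "(\<Prod>b\<in>B. 1 + 2 * of_bool (F b) :: real) = (\<Prod>b\<in>B. if F b then 3 else 1)"
    by (intro prod.cong) auto
  also have "\<dots> = (\<Prod>b\<in>B \<inter> {b. F b}. 3)"
    using \<open>finite B\<close> by (simp add: prod.If_cases)
  finally show ?thesis
    by (simp add: Int_def)
qed

definition block :: "nat \<Rightarrow> nat \<Rightarrow> nat set" where
  "block K b = {(b - 1) * K + 1 .. b * K}"

lemma card_block: "b \<ge> 1 \<Longrightarrow> card (block K b) = K"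
  unfolding block_def by (simp add: diff_mult_distrib)

locale finite_distribution =
  fixes A :: "'a set" and P :: "'a \<Rightarrow> real"
  assumes finite_space: "finite A"
    and nonneg: "\<And>a. a \<in> A \<Longrightarrow> 0 \<le> P a"
    and sum_one: "(\<Sum>a\<in>A. P a) = 1"
begin

definition expect :: "'b set \<Rightarrow> (('b \<Rightarrow> 'a) \<Rightarrow> real) \<Rightarrow> real" where
  "expect I f = (\<Sum>Q\<in>I \<rightarrow>\<^sub>E A. (\<Prod>k\<in>I. P (Q k)) * f Q)"

definition collision_prob :: "nat \<Rightarrow> real" where
  "collision_prob m = (\<Sum>a\<in>A. P a ^ m)"

lemma expect_indicator:
  assumes "finite I"
  shows "expect I (\<lambda>Q. of_bool (E Q)) = (\<Sum>Q\<in>{Q \<in> I \<rightarrow>\<^sub>E A. E Q}. \<Prod>k\<in>I. P (Q k))"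
proof -
  have "finite (I \<rightarrow>\<^sub>E A)"
    using assms finite_space by (simp add: finite_PiE)
  then show ?thesis
    unfolding expect_def by (simp add: sum.inter_filter of_bool_def if_distrib cong: if_cong)
qed

lemma expect_add: "expect I (\<lambda>Q. f Q + g Q) = expect I f + expect I g"
  unfolding expect_def by (simp add: distrib_left sum.distrib)

lemma expect_diff: "expect I (\<lambda>Q. f Q - g Q) = expect I f - expect I g"
  unfolding expect_def by (simp add: right_diff_distrib sum_subtractf)

lemma expect_cmult: "expect I (\<lambda>Q. c * f Q) = c * expect I f"
  unfolding expect_def by (simp add: sum_distrib_left mult_ac)

lemma expect_sum: "expect I (\<lambda>Q. \<Sum>b\<in>B. g b Q) = (\<Sum>b\<in>B. expect I (g b))"
  unfolding expect_def sum_distrib_left by (rule sum.swap)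

lemma expect_cong: "(\<And>Q. Q \<in> I \<rightarrow>\<^sub>E A \<Longrightarrow> f Q = g Q) \<Longrightarrow> expect I f = expect I g"
  unfolding expect_def by (intro sum.cong refl) auto

lemma expect_mono: "(\<And>Q. Q \<in> I \<rightarrow>\<^sub>E A \<Longrightarrow> f Q \<le> g Q) \<Longrightarrow> expect I f \<le> expect I g"
  unfolding expect_def by (intro sum_mono mult_left_mono prod_nonneg) (auto intro: nonneg)

lemma expect_nonneg: "(\<And>Q. Q \<in> I \<rightarrow>\<^sub>E A \<Longrightarrow> 0 \<le> f Q) \<Longrightarrow> 0 \<le> expect I f"
  unfolding expect_def by (intro sum_nonneg mult_nonneg_nonneg prod_nonneg) (auto intro: nonneg)

lemma expect_prod_coordinates:
  assumes "finite I" "J \<subseteq> I"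
  shows "expect I (\<lambda>Q. \<Prod>k\<in>J. f k (Q k)) = (\<Prod>k\<in>J. \<Sum>a\<in>A. P a * f k a)"
proof -
  have "expect I (\<lambda>Q. \<Prod>k\<in>J. f k (Q k))
      = (\<Sum>Q\<in>I \<rightarrow>\<^sub>E A. \<Prod>k\<in>I. P (Q k) * (if k \<in> J then f k (Q k) else 1))"
    unfolding expect_def prod.distrib prod.If_cases[OF assms(1)] Int_absorb1[OF assms(2)]
      Collect_mem_eq by simp
  also have "\<dots> = (\<Prod>k\<in>I. \<Sum>a\<in>A. P a * (if k \<in> J then f k a else 1))"
    by (rule prod_sum_PiE[symmetric]) (auto simp: assms finite_space)
  also have "\<dots> = (\<Prod>k\<in>I. if k \<in> J then (\<Sum>a\<in>A. P a * f k a) else 1)"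
    by (intro prod.cong refl) (auto simp: sum_one)
  also have "\<dots> = (\<Prod>k\<in>J. \<Sum>a\<in>A. P a * f k a)"
    unfolding prod.If_cases[OF assms(1)] Int_absorb1[OF assms(2)] Collect_mem_eq by simp
  finally show ?thesis .
qed

lemma expect_const: "finite I \<Longrightarrow> expect I (\<lambda>Q. c) = c"
  using expect_prod_coordinates[of I "{}"] expect_cmult[of I c "\<lambda>_. 1"] by simp

lemma expect_all_equal:
  assumes "finite I" "J \<subseteq> I" "j \<in> J"
  shows "expect I (\<lambda>Q. of_bool (\<forall>k\<in>J. Q k = Q j)) = collision_prob (card J)"
proof -
  have "expect I (\<lambda>Q. of_bool (\<forall>k\<in>J. Q k = Q j)) = expect I (\<lambda>Q. \<Sum>a\<in>A. \<Prod>k\<in>J. of_bool (Q k = a))"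
  proof (rule expect_cong)
    fix Q assume "Q \<in> I \<rightarrow>\<^sub>E A"
    then have "Q j \<in> A"
      using assms(2,3) by auto
    have "finite J"
      using assms(2,1) by (rule finite_subset)
    then have "(\<Prod>k\<in>J. of_bool (Q k = a)) = (of_bool (Q j = a \<and> (\<forall>k\<in>J. Q k = Q j)) :: real)" for a
      using assms(3) by (induction J rule: finite_induct) auto
    then have "(\<Sum>a\<in>A. \<Prod>k\<in>J. of_bool (Q k = a))
        = (\<Sum>a\<in>A. of_bool (Q j = a)) * (of_bool (\<forall>k\<in>J. Q k = Q j) :: real)"
      by (simp only: of_bool_conj sum_distrib_right)
    also have "(\<Sum>a\<in>A. of_bool (Q j = a)) = (1 :: real)"
      using \<open>Q j \<in> A\<close> finite_space by (simp add: of_bool_def)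
    finally have "(\<Sum>a\<in>A. \<Prod>k\<in>J. of_bool (Q k = a)) = (of_bool (\<forall>k\<in>J. Q k = Q j) :: real)"
      by (simp only: mult_1_left)
    then show "(of_bool (\<forall>k\<in>J. Q k = Q j) :: real) = (\<Sum>a\<in>A. \<Prod>k\<in>J. of_bool (Q k = a))" ..
  qed
  also have "\<dots> = (\<Sum>a\<in>A. \<Prod>k\<in>J. \<Sum>b\<in>A. P b * of_bool (b = a))"
    unfolding expect_sum by (intro sum.cong refl) (rule expect_prod_coordinates[OF assms(1,2)])
  also have "\<dots> = (\<Sum>a\<in>A. \<Prod>k\<in>J. P a)"
    using finite_space by (intro sum.cong prod.cong refl) (simp add: of_bool_def if_distrib cong: if_cong)
  finally show ?thesis
    unfolding collision_prob_def by simp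
qed

lemma expect_union:
  assumes "finite I" "finite J" "I \<inter> J = {}"
    and f: "\<And>Q. f Q = f (restrict Q I)" and g: "\<And>Q. g Q = g (restrict Q J)"
  shows "expect (I \<union> J) (\<lambda>Q. f Q * g Q) = expect I f * expect J g"
proof -
  define w where "w I Q = (\<Prod>k\<in>I. P (Q k))" for I :: "'b set" and Q
  have "expect (I \<union> J) (\<lambda>Q. f Q * g Q)
      = (\<Sum>Q\<in>(I \<union> J) \<rightarrow>\<^sub>E A. (w I (restrict Q I) * f (restrict Q I)) * (w J (restrict Q J) * g (restrict Q J)))"
    unfolding expect_def
  proof (intro sum.cong refl)
    fix Q
    have "w (I \<union> J) Q = w I (restrict Q I) * w J (restrict Q J)"
      unfolding w_def prod.union_disjoint[OF assms(1-3)] by simp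
    then show "(\<Prod>k\<in>I \<union> J. P (Q k)) * (f Q * g Q)
        = w I (restrict Q I) * f (restrict Q I) * (w J (restrict Q J) * g (restrict Q J))"
      unfolding w_def using f[of Q] g[of Q] by (simp add: mult_ac)
  qed
  also have "\<dots> = (\<Sum>(u, v)\<in>(I \<rightarrow>\<^sub>E A) \<times> (J \<rightarrow>\<^sub>E A). (w I u * f u) * (w J v * g v))"
    \<comment> \<open>a sample on \<open>I \<union> J\<close> is a pair of samples on \<open>I\<close> and on \<open>J\<close>\<close>
    by (rule sum.reindex_bij_witness[where i = "\<lambda>(u, v) k. if k \<in> I then u k else v k"
          and j = "\<lambda>Q. (restrict Q I, restrict Q J)"])
       (use assms(3) in \<open>auto simp: fun_eq_iff PiE_iff extensional_def\<close>)
  also have "\<dots> = expect I f * expect J g"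
    unfolding expect_def w_def sum_product sum.cartesian_product ..
  finally show ?thesis .
qed

lemma expect_marginal:
  assumes "finite I" "J \<subseteq> I" and f: "\<And>Q. f Q = f (restrict Q J)"
  shows "expect I f = expect J f"
proof -
  have "I = J \<union> (I - J)"
    using assms(2) by blast
  then have "expect I f = expect (J \<union> (I - J)) (\<lambda>Q. f Q * 1)"
    by simp
  also have "\<dots> = expect J f"
    using assms finite_subset expect_union[of J "I - J" f "\<lambda>_. 1"] expect_const[of "I - J" 1]
    by (metis Diff_disjoint finite_Diff mult.right_neutral)
  finally show ?thesis .
qed

lemma collision_prob_nonneg: "0 \<le> collision_prob m"
  unfolding collision_prob_def by (simp add: sum_nonneg nonneg)

lemma expect_coincidence:
  assumes "finite I" "k \<in> I" "k' \<in> I" "k \<noteq> k'"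
  shows "expect I (\<lambda>Q. of_bool (Q k = Q k')) = collision_prob 2"
  using expect_all_equal[of I "{k, k'}" k] assms by (simp add: eq_commute numeral_2_eq_2)

lemma expect_coincidence_disjoint_pairs:
  assumes "finite I" "{k, k', l, l'} \<subseteq> I" "k \<noteq> k'" "l \<noteq> l'" "{k, k'} \<inter> {l, l'} = {}"
  shows "expect I (\<lambda>Q. of_bool (Q k = Q k') * of_bool (Q l = Q l')) = collision_prob 2 ^ 2"
proof -
  have "expect I (\<lambda>Q. of_bool (Q k = Q k') * of_bool (Q l = Q l'))
      = expect ({k, k'} \<union> {l, l'}) (\<lambda>Q. of_bool (Q k = Q k') * of_bool (Q l = Q l'))"
    using assms(1,2) by (intro expect_marginal) auto
  also have "\<dots> = expect {k, k'} (\<lambda>Q. of_bool (Q k = Q k')) * expect {l, l'} (\<lambda>Q. of_bool (Q l = Q l'))"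
    using assms(5) by (intro expect_union) auto
  also have "\<dots> = collision_prob 2 ^ 2"
    using assms(3,4) by (simp add: expect_coincidence power2_eq_square)
  finally show ?thesis .
qed

lemma expect_coincidence_overlapping_pairs:
  assumes "finite I" "{k, k', l, l'} \<subseteq> I" "{k, k'} \<inter> {l, l'} \<noteq> {}"
  shows "expect I (\<lambda>Q. of_bool (Q k = Q k') * of_bool (Q l = Q l')) = collision_prob (card {k, k', l, l'})"
proof -
  have "(Q k = Q k' \<and> Q l = Q l') \<longleftrightarrow> (\<forall>i\<in>{k, k', l, l'}. Q i = Q k)" for Q :: "'b \<Rightarrow> 'a"
    using assms(3) by auto
  then have "expect I (\<lambda>Q. of_bool (Q k = Q k') * of_bool (Q l = Q l'))
      = expect I (\<lambda>Q. of_bool (\<forall>i\<in>{k, k', l, l'}. Q i = Q k))"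
    by (simp add: of_bool_conj[symmetric])
  also have "\<dots> = collision_prob (card {k, k', l, l'})"
    using assms by (intro expect_all_equal) auto
  finally show ?thesis .
qed

definition coincidence_dev :: "'b \<Rightarrow> 'b \<Rightarrow> ('b \<Rightarrow> 'a) \<Rightarrow> real" where
  "coincidence_dev k k' Q = of_bool (k \<noteq> k') * (of_bool (Q k = Q k') - collision_prob 2)"

lemma expect_coincidence_dev_mult:
  assumes "finite I" "{k, k', l, l'} \<subseteq> I" "k \<noteq> k'" "l \<noteq> l'"
  shows "expect I (\<lambda>Q. coincidence_dev k k' Q * coincidence_dev l l' Q)
    = expect I (\<lambda>Q. of_bool (Q k = Q k') * of_bool (Q l = Q l')) - collision_prob 2 ^ 2"
proof -
  have "expect I (\<lambda>Q. coincidence_dev k k' Q * coincidence_dev l l' Q)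
      = expect I (\<lambda>Q. of_bool (Q k = Q k') * of_bool (Q l = Q l') - collision_prob 2 * of_bool (Q k = Q k')
          - collision_prob 2 * of_bool (Q l = Q l') + collision_prob 2 ^ 2)"
    using assms(3,4) by (simp add: coincidence_dev_def algebra_simps power2_eq_square)
  also have "\<dots> = expect I (\<lambda>Q. of_bool (Q k = Q k') * of_bool (Q l = Q l')) - collision_prob 2 ^ 2"
    using assms expect_coincidence[OF assms(1)]
    by (simp add: expect_diff expect_add expect_cmult expect_const power2_eq_square)
  finally show ?thesis .
qed

lemma expect_coincidence_dev_mult_le:
  assumes "finite I" "{k, k', l, l'} \<subseteq> I" "k \<noteq> k'" "l \<noteq> l'"
  shows "expect I (\<lambda>Q. coincidence_dev k k' Q * coincidence_dev l l' Q)
    \<le> collision_prob 3 * (of_bool (l = k) + of_bool (l = k') + of_bool (l' = k) + of_bool (l' = k'))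
      + collision_prob 2 * (of_bool (l = k \<and> l' = k') + of_bool (l = k' \<and> l' = k))"
    (is "_ \<le> ?bound")
proof -
  have "expect I (\<lambda>Q. coincidence_dev k k' Q * coincidence_dev l l' Q)
      = expect I (\<lambda>Q. of_bool (Q k = Q k') * of_bool (Q l = Q l')) - collision_prob 2 ^ 2"
    by (rule expect_coincidence_dev_mult[OF assms])
  also have "\<dots> \<le> ?bound"
  proof (cases "{k, k'} \<inter> {l, l'} = {}")
    case True
    then show ?thesis
      using assms collision_prob_nonneg[of 2] collision_prob_nonneg[of 3]
      by (simp add: expect_coincidence_disjoint_pairs)
  next
    case False
    show ?thesis
    proof (cases "l = k \<and> l' = k' \<or> l = k' \<and> l' = k")
      case True
      then have "{k, k', l, l'} = {k, k'}"
        by auto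
      then have "card {k, k', l, l'} = 2"
        using assms(3) by simp
      then have "expect I (\<lambda>Q. of_bool (Q k = Q k') * of_bool (Q l = Q l')) = collision_prob 2"
        using expect_coincidence_overlapping_pairs[OF assms(1,2) False] by simp
      moreover have "collision_prob 2 \<le> ?bound"
        using True assms(3) collision_prob_nonneg[of 3] by auto
      ultimately show ?thesis
        using zero_le_power2[of "collision_prob 2"] by linarith
    next
      case False
      then have "card {k, k', l, l'} = 3"
        using \<open>{k, k'} \<inter> {l, l'} \<noteq> {}\<close> assms(3,4) by (auto simp: card_insert_if)
      then have "expect I (\<lambda>Q. of_bool (Q k = Q k') * of_bool (Q l = Q l')) = collision_prob 3"
        using expect_coincidence_overlapping_pairs[OF assms(1,2) \<open>{k, k'} \<inter> {l, l'} \<noteq> {}\<close>] by simp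
      moreover have "collision_prob 3 \<le> ?bound"
        using \<open>{k, k'} \<inter> {l, l'} \<noteq> {}\<close> collision_prob_nonneg[of 2] collision_prob_nonneg[of 3]
        by (auto simp: algebra_simps)
      ultimately show ?thesis
        using zero_le_power2[of "collision_prob 2"] by linarith
    qed
  qed
  finally show ?thesis .
qed

lemma sum_expect_coincidence_dev_le:
  assumes "finite B" "k \<in> B" "k' \<in> B"
  shows "(\<Sum>l\<in>B. \<Sum>l'\<in>B. expect B (\<lambda>Q. coincidence_dev k k' Q * coincidence_dev l l' Q))
    \<le> of_bool (k \<noteq> k') * (4 * (real (card B) - 1) * collision_prob 3 + 2 * collision_prob 2)"
proof (cases "k = k'")
  case True
  then show ?thesis
    using expect_const[OF assms(1), of 0] by (simp add: coincidence_dev_def)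
next
  case False
  have "(\<Sum>l\<in>B. \<Sum>l'\<in>B. expect B (\<lambda>Q. coincidence_dev k k' Q * coincidence_dev l l' Q))
      \<le> (\<Sum>l\<in>B. \<Sum>l'\<in>B. of_bool (l \<noteq> l') *
        (collision_prob 3 * (of_bool (l = k) + of_bool (l = k') + of_bool (l' = k) + of_bool (l' = k'))
         + collision_prob 2 * (of_bool (l = k \<and> l' = k') + of_bool (l = k' \<and> l' = k))))"
  proof (intro sum_mono)
    fix l l' assume "l \<in> B" "l' \<in> B"
    then show "expect B (\<lambda>Q. coincidence_dev k k' Q * coincidence_dev l l' Q) \<le> of_bool (l \<noteq> l') *
        (collision_prob 3 * (of_bool (l = k) + of_bool (l = k') + of_bool (l' = k) + of_bool (l' = k'))
         + collision_prob 2 * (of_bool (l = k \<and> l' = k') + of_bool (l = k' \<and> l' = k)))"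
      using assms(2,3) False expect_coincidence_dev_mult_le[OF assms(1), of k k' l l'] expect_const[OF assms(1), of 0]
      by (cases "l = l'") (simp_all add: coincidence_dev_def)
  qed
  also have "\<dots> = collision_prob 3 * ((\<Sum>l\<in>B. \<Sum>l'\<in>B. of_bool (l \<noteq> l' \<and> l = k))
        + (\<Sum>l\<in>B. \<Sum>l'\<in>B. of_bool (l \<noteq> l' \<and> l = k')) + (\<Sum>l\<in>B. \<Sum>l'\<in>B. of_bool (l \<noteq> l' \<and> l' = k))
        + (\<Sum>l\<in>B. \<Sum>l'\<in>B. of_bool (l \<noteq> l' \<and> l' = k')))
      + collision_prob 2 * ((\<Sum>l\<in>B. \<Sum>l'\<in>B. of_bool (l \<noteq> l' \<and> l = k \<and> l' = k'))
        + (\<Sum>l\<in>B. \<Sum>l'\<in>B. of_bool (l \<noteq> l' \<and> l = k' \<and> l' = k)))"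
    by (simp add: sum.distrib sum_distrib_left algebra_simps of_bool_conj)
  also have "\<dots> = of_bool (k \<noteq> k') * (4 * (real (card B) - 1) * collision_prob 3 + 2 * collision_prob 2)"
    unfolding sum_offdiag_fst[OF assms(1,2)] sum_offdiag_fst[OF assms(1,3)]
      sum_offdiag_snd[OF assms(1,2)] sum_offdiag_snd[OF assms(1,3)]
      sum_offdiag_pair[OF assms(1,2,3)] sum_offdiag_pair[OF assms(1,3,2)]
    using False by simp
  finally show ?thesis .
qed

lemma expect_coincidence_rate_variance:
  assumes "finite B" "card B \<ge> 2"
  shows "expect B (\<lambda>Q. (coincidence_rate B Q - collision_prob 2)\<^sup>2)
    \<le> (4 * (real (card B) - 1) * collision_prob 3 + 2 * collision_prob 2) / (real (card B) * (real (card B) - 1))"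
proof -
  define N where "N = real (card B) * (real (card B) - 1)"
  define C where "C = 4 * (real (card B) - 1) * collision_prob 3 + 2 * collision_prob 2"
  define D where "D Q = (\<Sum>k\<in>B. \<Sum>k'\<in>B. coincidence_dev k k' Q)" for Q
  have "N > 0"
    unfolding N_def using assms(2) by simp
  have offdiag: "(\<Sum>k\<in>B. \<Sum>k'\<in>B. of_bool (k \<noteq> k')) = N"
    unfolding N_def by (rule sum_offdiag[OF assms(1)])
  have dev: "coincidence_rate B Q - collision_prob 2 = D Q / N" for Q
  proof -
    have "(\<Sum>k\<in>B. \<Sum>k'\<in>B. of_bool (k \<noteq> k' \<and> Q k = Q k'))
        = (\<Sum>k\<in>B. \<Sum>k'\<in>B. coincidence_dev k k' Q + collision_prob 2 * of_bool (k \<noteq> k'))"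
      unfolding coincidence_dev_def by (intro sum.cong refl) (simp add: algebra_simps)
    also have "\<dots> = D Q + collision_prob 2 * N"
      unfolding D_def sum.distrib sum_distrib_left[symmetric] offdiag ..
    finally show ?thesis
      unfolding coincidence_rate_def N_def[symmetric] using \<open>N > 0\<close> by (simp add: field_simps)
  qed
  have "expect B (\<lambda>Q. (D Q)\<^sup>2)
      = (\<Sum>k\<in>B. \<Sum>k'\<in>B. \<Sum>l\<in>B. \<Sum>l'\<in>B. expect B (\<lambda>Q. coincidence_dev k k' Q * coincidence_dev l l' Q))"
    unfolding D_def power2_eq_square sum_product expect_sum
    by (rule sum.cong[OF refl], rule sum.swap)
  also have "\<dots> \<le> (\<Sum>k\<in>B. \<Sum>k'\<in>B. of_bool (k \<noteq> k') * C)"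
    unfolding C_def by (rule sum_mono)+ (rule sum_expect_coincidence_dev_le[OF assms(1)])
  also have "\<dots> = N * C"
    unfolding sum_distrib_right[symmetric] offdiag ..
  finally have "expect B (\<lambda>Q. (D Q)\<^sup>2) \<le> N * C" .
  then have "expect B (\<lambda>Q. (D Q)\<^sup>2) / N\<^sup>2 \<le> C / N"
    using \<open>N > 0\<close> by (simp add: field_simps power2_eq_square)
  moreover have "expect B (\<lambda>Q. (coincidence_rate B Q - collision_prob 2)\<^sup>2)
      = expect B (\<lambda>Q. inverse (N\<^sup>2) * (D Q)\<^sup>2)"
    unfolding dev by (simp add: power_divide field_simps)
  then have "expect B (\<lambda>Q. (coincidence_rate B Q - collision_prob 2)\<^sup>2) = expect B (\<lambda>Q. (D Q)\<^sup>2) / N\<^sup>2"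
    unfolding expect_cmult by (simp add: field_simps)
  ultimately show ?thesis
    unfolding C_def N_def by simp
qed

lemma expect_far_le:
  assumes "\<epsilon> > 0"
  shows "expect I (\<lambda>Q. of_bool (\<epsilon> \<le> \<bar>f Q\<bar>)) \<le> expect I (\<lambda>Q. (f Q)\<^sup>2) / \<epsilon>\<^sup>2"
proof -
  have "of_bool (\<epsilon> \<le> \<bar>f Q\<bar>) \<le> (f Q)\<^sup>2 / \<epsilon>\<^sup>2" for Q
  proof (cases "\<epsilon> \<le> \<bar>f Q\<bar>")
    case True
    then have "\<epsilon>\<^sup>2 \<le> (f Q)\<^sup>2"
      using assms by (metis abs_of_pos power2_abs power_mono less_imp_le)
    then show ?thesis
      using True assms by simp
  qed simp
  then have "expect I (\<lambda>Q. of_bool (\<epsilon> \<le> \<bar>f Q\<bar>)) \<le> expect I (\<lambda>Q. 1 / \<epsilon>\<^sup>2 * (f Q)\<^sup>2)"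
    by (intro expect_mono) simp
  also have "\<dots> = expect I (\<lambda>Q. (f Q)\<^sup>2) / \<epsilon>\<^sup>2"
    unfolding expect_cmult by simp
  finally show ?thesis .
qed

lemma expect_coincidence_estimate_far:
  assumes "finite B" "card B \<ge> 2" "\<epsilon> > 0"
    and p2: "collision_prob 2 \<le> (1/3) ^ s" and p3: "collision_prob 3 \<le> (1/2) ^ s * collision_prob 2"
    and size: "16 * (real (card B) - 1) * (3/2) ^ s + 8 * 3 ^ s \<le> \<epsilon>\<^sup>2 * (real (card B) * (real (card B) - 1))"
  shows "expect B (\<lambda>Q. of_bool (\<epsilon> \<le> \<bar>3 ^ s * (coincidence_rate B Q - collision_prob 2)\<bar>)) \<le> 1/4"
proof -
  define N where "N = real (card B) * (real (card B) - 1)"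
  have "N > 0"
    unfolding N_def using assms(2) by simp
  have "9 ^ s * collision_prob 2 \<le> 9 ^ s * (1/3) ^ s"
    using p2 by (intro mult_left_mono) auto
  also have "\<dots> = 3 ^ s"
    by (simp flip: power_mult_distrib)
  finally have p2': "9 ^ s * collision_prob 2 \<le> 3 ^ s" .
  have "(1/2) ^ s * collision_prob 2 \<le> (1/2) ^ s * (1/3) ^ s"
    using p2 by (intro mult_left_mono) auto
  with p3 have "collision_prob 3 \<le> (1/2) ^ s * (1/3) ^ s"
    by linarith
  then have "9 ^ s * collision_prob 3 \<le> 9 ^ s * ((1/2) ^ s * (1/3) ^ s)"
    by (intro mult_left_mono) auto
  also have "\<dots> = (3/2) ^ s"
    by (simp flip: power_mult_distrib)
  finally have p3': "9 ^ s * collision_prob 3 \<le> (3/2) ^ s" .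
  have "expect B (\<lambda>Q. of_bool (\<epsilon> \<le> \<bar>3 ^ s * (coincidence_rate B Q - collision_prob 2)\<bar>))
      \<le> expect B (\<lambda>Q. (3 ^ s * (coincidence_rate B Q - collision_prob 2))\<^sup>2) / \<epsilon>\<^sup>2"
    by (rule expect_far_le[OF assms(3)])
  also have "\<dots> = 9 ^ s * expect B (\<lambda>Q. (coincidence_rate B Q - collision_prob 2)\<^sup>2) / \<epsilon>\<^sup>2"
  proof -
    have "((3::real) ^ s)\<^sup>2 = 9 ^ s"
      by (simp add: power2_eq_square flip: power_mult_distrib)
    then show ?thesis
      by (simp add: power_mult_distrib expect_cmult)
  qed
  also have "\<dots> \<le> 9 ^ s * ((4 * (real (card B) - 1) * collision_prob 3 + 2 * collision_prob 2) / N) / \<epsilon>\<^sup>2"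
    unfolding N_def using expect_coincidence_rate_variance[OF assms(1,2)]
    by (intro divide_right_mono mult_left_mono) auto
  also have "\<dots> = (4 * (real (card B) - 1) * (9 ^ s * collision_prob 3) + 2 * (9 ^ s * collision_prob 2)) / (\<epsilon>\<^sup>2 * N)"
    by (simp add: field_simps)
  also have "\<dots> \<le> (4 * (real (card B) - 1) * (3/2) ^ s + 2 * 3 ^ s) / (\<epsilon>\<^sup>2 * N)"
    using p2' p3' assms(2) \<open>N > 0\<close> by (intro divide_right_mono add_mono mult_left_mono) auto
  also have "\<dots> \<le> 1/4"
  proof -
    have "4 * (4 * (real (card B) - 1) * (3/2) ^ s + 2 * 3 ^ s) \<le> \<epsilon>\<^sup>2 * N"
      using size unfolding N_def by (simp add: algebra_simps)
    moreover have "\<epsilon>\<^sup>2 * N > 0"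
      using \<open>N > 0\<close> assms(3) by simp
    ultimately show ?thesis
      by (simp add: pos_divide_le_eq)
  qed
  finally show ?thesis .
qed

lemma expect_prod_blocks:
  assumes local: "\<And>b Q. g b Q = g b (restrict Q (block K b))"
  shows "expect {1..m * K} (\<lambda>Q. \<Prod>b\<in>{1..m}. g b Q) = (\<Prod>b\<in>{1..m}. expect (block K b) (g b))"
proof (induction m)
  case 0
  show ?case
    using expect_const[of "{}" 1] by simp
next
  case (Suc m)
  have split: "{1..Suc m * K} = {1..m * K} \<union> block K (Suc m)"
    unfolding block_def by auto
  have "(\<Prod>b\<in>{1..m}. g b Q) = (\<Prod>b\<in>{1..m}. g b (restrict Q {1..m * K}))" for Q
  proof (intro prod.cong refl)
    fix b assume "b \<in> {1..m}"
    then have "block K b \<subseteq> {1..m * K}"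
      unfolding block_def by (auto simp: mult_le_mono1)
    then have "restrict Q (block K b) = restrict (restrict Q {1..m * K}) (block K b)"
      by (auto simp: fun_eq_iff)
    then show "g b Q = g b (restrict Q {1..m * K})"
      using local by metis
  qed
  note restrict_blocks = this
  have "expect {1..Suc m * K} (\<lambda>Q. \<Prod>b\<in>{1..Suc m}. g b Q)
      = expect ({1..m * K} \<union> block K (Suc m)) (\<lambda>Q. (\<Prod>b\<in>{1..m}. g b Q) * g (Suc m) Q)"
    unfolding split by (simp add: prod.cl_ivl_Suc mult.commute)
  also have "\<dots> = expect {1..m * K} (\<lambda>Q. \<Prod>b\<in>{1..m}. g b Q) * expect (block K (Suc m)) (g (Suc m))"
    using restrict_blocks local[of "Suc m"] by (intro expect_union) (auto simp: block_def)
  finally show ?case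
    using Suc.IH by (simp add: prod.cl_ivl_Suc mult.commute)
qed

lemma expect_majority_le:
  assumes local: "\<And>b Q. F b Q = F b (restrict Q (block K b))"
    and fail: "\<And>b. b \<in> {1..m} \<Longrightarrow> expect (block K b) (\<lambda>Q. of_bool (F b Q)) \<le> 1/4"
  shows "expect {1..m * K} (\<lambda>Q. of_bool (m \<le> 2 * card {b \<in> {1..m}. F b Q})) \<le> (sqrt 3 / 2) ^ m"
proof -
  define g where "g b Q = (1 + 2 * of_bool (F b Q) :: real)" for b Q
  have prod_g: "(\<Prod>b\<in>{1..m}. g b Q) = 3 ^ card {b \<in> {1..m}. F b Q}" for Q
    unfolding g_def by (rule prod_one_plus_two_of_bool) simp
  \<comment> \<open>Markov's inequality for \<open>3\<^bsup>#failures\<^esup>\<close>, whose expectation factorises over the blocks\<close>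
  have "of_bool (m \<le> 2 * card {b \<in> {1..m}. F b Q}) \<le> (\<Prod>b\<in>{1..m}. g b Q) / sqrt 3 ^ m" for Q
  proof (cases "m \<le> 2 * card {b \<in> {1..m}. F b Q}")
    case True
    then have "sqrt 3 ^ m \<le> sqrt 3 ^ (2 * card {b \<in> {1..m}. F b Q})"
      by (intro power_increasing) auto
    then show ?thesis
      using True unfolding prod_g by (simp add: power_mult)
  qed (unfold prod_g, simp)
  then have "expect {1..m * K} (\<lambda>Q. of_bool (m \<le> 2 * card {b \<in> {1..m}. F b Q}))
      \<le> expect {1..m * K} (\<lambda>Q. 1 / sqrt 3 ^ m * (\<Prod>b\<in>{1..m}. g b Q))"
    by (intro expect_mono) simp
  also have "\<dots> = (\<Prod>b\<in>{1..m}. expect (block K b) (g b)) / sqrt 3 ^ m"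
  proof -
    have "g b Q = g b (restrict Q (block K b))" for b Q
      unfolding g_def using local[of b Q] by simp
    then have "expect {1..m * K} (\<lambda>Q. \<Prod>b\<in>{1..m}. g b Q) = (\<Prod>b\<in>{1..m}. expect (block K b) (g b))"
      by (rule expect_prod_blocks)
    then show ?thesis
      unfolding expect_cmult by simp
  qed
  also have "\<dots> \<le> (\<Prod>b\<in>{1..m}. 3/2) / sqrt 3 ^ m"
  proof (intro divide_right_mono prod_mono conjI)
    fix b assume "b \<in> {1..m}"
    then have "expect (block K b) (g b) = 1 + 2 * expect (block K b) (\<lambda>Q. of_bool (F b Q))"
      unfolding g_def expect_add expect_cmult by (simp add: expect_const block_def)
    then show "0 \<le> expect (block K b) (g b)" "expect (block K b) (g b) \<le> 3/2"
      using fail[OF \<open>b \<in> {1..m}\<close>] expect_nonneg[of "block K b" "\<lambda>Q. of_bool (F b Q)"] by auto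
  qed simp
  also have "\<dots> = ((3/2) / sqrt 3) ^ m"
    by (simp add: power_divide)
  also have "(3/2) / sqrt 3 = sqrt 3 / (2 :: real)"
    by (simp add: field_simps flip: real_sqrt_mult)
  finally show ?thesis .
qed

end

section \<open>The median-of-batches estimator\<close>

lemma median_between:
  assumes "xs \<noteq> []"
  shows "sort xs ! ((length xs - 1) div 2) \<le> median xs" "median xs \<le> sort xs ! (length xs div 2)"
proof -
  define ys where "ys = sort xs"
  define h where "h = length xs div 2"
  have mono: "i \<le> j \<Longrightarrow> j < length xs \<Longrightarrow> ys ! i \<le> ys ! j" for i j
    unfolding ys_def by (simp add: sorted_nth_mono)
  have "ys ! ((length xs - 1) div 2) \<le> median xs \<and> median xs \<le> ys ! h"
  proof (cases "odd (length xs)")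
    case True
    then have "(length xs - 1) div 2 = h"
      unfolding h_def by presburger
    then show ?thesis
      using True unfolding median_def ys_def h_def Let_def by simp
  next
    case False
    moreover have "length xs > 0"
      using assms by simp
    ultimately have "h \<ge> 1" "(length xs - 1) div 2 = h - 1" "h < length xs"
      unfolding h_def by presburger+
    moreover have "ys ! (h - 1) \<le> ys ! h"
      using calculation by (intro mono) auto
    ultimately show ?thesis
      using False unfolding median_def ys_def[symmetric] h_def[symmetric] Let_def by simp
  qed
  then show "sort xs ! ((length xs - 1) div 2) \<le> median xs" "median xs \<le> sort xs ! (length xs div 2)"
    unfolding ys_def h_def by simp_all
qed

lemma length_filter_ge_card:
  assumes "J \<subseteq> {..<length ys}" "\<And>j. j \<in> J \<Longrightarrow> P (ys ! j)"
  shows "card J \<le> length (filter P ys)"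
proof -
  have "card J \<le> card {j. j < length ys \<and> P (ys ! j)}"
    using assms by (intro card_mono) auto
  then show ?thesis
    by (simp add: length_filter_conv_card)
qed

lemma many_far_if_median_far:
  fixes xs :: "real list"
  assumes "xs \<noteq> []" "\<epsilon> \<le> \<bar>median xs - c\<bar>"
  shows "length xs \<le> 2 * length (filter (\<lambda>x. \<epsilon> \<le> \<bar>x - c\<bar>) xs)"
proof -
  define ys where "ys = sort xs"
  define far where "far x \<longleftrightarrow> \<epsilon> \<le> \<bar>x - c\<bar>" for x
  have mono: "i \<le> j \<Longrightarrow> j < length xs \<Longrightarrow> ys ! i \<le> ys ! j" for i j
    unfolding ys_def by (simp add: sorted_nth_mono)
  have len: "length ys = length xs" "length (filter far ys) = length (filter far xs)"
    unfolding ys_def by (simp_all add: filter_sort)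
  have "0 < length xs"
    using assms(1) by simp
  then have lo: "(length xs - 1) div 2 < length xs"
    by presburger
  have "length xs \<le> 2 * length (filter far ys)"
  proof (cases "c + \<epsilon> \<le> median xs")
    case True
    have "far (ys ! j)" if "j \<in> {length xs div 2..<length xs}" for j
    proof -
      have "ys ! (length xs div 2) \<le> ys ! j"
        using that by (intro mono) auto
      then show ?thesis
        using True median_between(2)[OF assms(1)] abs_ge_self[of "ys ! j - c"]
        unfolding far_def ys_def by linarith
    qed
    then have "card {length xs div 2..<length xs} \<le> length (filter far ys)"
      using len(1) by (intro length_filter_ge_card) auto
    then show ?thesis
      by simp
  next
    case False
    then have "median xs \<le> c - \<epsilon>"
      using assms(2) by linarith
    have "far (ys ! j)" if "j \<in> {..(length xs - 1) div 2}" for j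
    proof -
      have "ys ! j \<le> ys ! ((length xs - 1) div 2)"
        using that lo by (intro mono) auto
      then show ?thesis
        using \<open>median xs \<le> c - \<epsilon>\<close> median_between(1)[OF assms(1)] abs_ge_minus_self[of "ys ! j - c"]
        unfolding far_def ys_def by linarith
    qed
    then have "card {..(length xs - 1) div 2} \<le> length (filter far ys)"
      using len(1) lo by (intro length_filter_ge_card) auto
    then show ?thesis
      using assms(1) by simp
  qed
  then show ?thesis
    using len(2) unfolding far_def by simp
qed

lemma N_B_ge:
  assumes "0 < \<delta>" "\<delta> < 1"
  shows "N_B \<delta> \<ge> 1" "8 * ln (1 / \<delta>) \<le> real (N_B \<delta>)"
proof -
  have "8 * ln (1 / \<delta>) > 0"
    using assms by simp
  then show "N_B \<delta> \<ge> 1" "8 * ln (1 / \<delta>) \<le> real (N_B \<delta>)"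
    unfolding N_B_def by (simp_all add: le_nat_iff le_of_int_ceiling)
qed

lemma sqrt3_half_power_N_B_le:
  assumes "0 < \<delta>" "\<delta> < 1"
  shows "(sqrt 3 / 2) ^ N_B \<delta> \<le> \<delta>"
proof -
  have "sqrt 3 \<le> sqrt ((7/4)\<^sup>2)"
    by (rule real_sqrt_le_mono) (simp add: power2_eq_square)
  then have "sqrt 3 / 2 \<le> exp (-1/8)"
    using exp_ge_add_one_self[of "-1/8"] by simp
  then have "(sqrt 3 / 2) ^ N_B \<delta> \<le> exp (-1/8) ^ N_B \<delta>"
    by (rule power_mono) simp
  also have "\<dots> = exp (- (real (N_B \<delta>) / 8))"
    by (simp flip: exp_of_nat_mult)
  also have "\<dots> \<le> exp (- ln (1 / \<delta>))"
    using N_B_ge(2)[OF assms] by simp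
  also have "\<dots> = \<delta>"
    using assms by (simp add: ln_div)
  finally show ?thesis .
qed

text \<open>\<open>K_opt \<epsilon> s\<close> is the ceiling of the larger root of
  \<open>\<epsilon>\<^sup>2 K (K - 1) = 16 (K - 1) (3/2)\<^sup>s + 8 \<cdot> 3\<^sup>s\<close>.\<close>

lemma K_opt_bounds:
  assumes "\<epsilon> > 0"
  shows "K_opt \<epsilon> s \<ge> 2"
    "16 * (real (K_opt \<epsilon> s) - 1) * (3/2) ^ s + 8 * 3 ^ s \<le> \<epsilon>\<^sup>2 * (real (K_opt \<epsilon> s) * (real (K_opt \<epsilon> s) - 1))"
proof -
  define a :: real where "a = (16 / \<epsilon>\<^sup>2) * (3/2) ^ s"
  define y :: real where "y = 8 * 3 ^ s / \<epsilon>\<^sup>2"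
  define r where "r = (1/2) * (a + 1) + (1/2) * sqrt ((a - 1)\<^sup>2 + 4 * y)"
  define K where "K = real (K_opt \<epsilon> s)"
  have "y > 0"
    unfolding y_def using assms by simp
  have K: "K_opt \<epsilon> s = nat \<lceil>r\<rceil>"
    unfolding K_opt_def r_def a_def y_def by simp
  have "sqrt ((a - 1)\<^sup>2 + 4 * y) > \<bar>a - 1\<bar>"
    using real_sqrt_less_mono[of "(a - 1)\<^sup>2" "(a - 1)\<^sup>2 + 4 * y"] \<open>y > 0\<close> by simp
  then have "sqrt ((a - 1)\<^sup>2 + 4 * y) > 1 - a"
    by linarith
  then have "r > 1"
    unfolding r_def by (simp add: field_simps)
  then have "K \<ge> r"
    unfolding K_def K by linarith
  then show "K_opt \<epsilon> s \<ge> 2"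
    using \<open>r > 1\<close> unfolding K_def by linarith
  have "sqrt ((a - 1)\<^sup>2 + 4 * y) \<le> 2 * K - a - 1"
    using \<open>K \<ge> r\<close> unfolding r_def by (simp add: field_simps)
  then have "(sqrt ((a - 1)\<^sup>2 + 4 * y))\<^sup>2 \<le> (2 * K - a - 1)\<^sup>2"
    using \<open>y > 0\<close> by (intro power_mono) simp_all
  then have "(a - 1)\<^sup>2 + 4 * y \<le> (2 * K - a - 1)\<^sup>2"
    using \<open>y > 0\<close> by simp
  then have "a * (K - 1) + y \<le> K * (K - 1)"
    by (simp add: power2_eq_square algebra_simps)
  then have "\<epsilon>\<^sup>2 * (a * (K - 1) + y) \<le> \<epsilon>\<^sup>2 * (K * (K - 1))"
    by (simp add: mult_left_mono)
  moreover have "\<epsilon>\<^sup>2 * (a * (K - 1) + y) = 16 * (K - 1) * (3/2) ^ s + 8 * 3 ^ s"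
    unfolding a_def y_def using assms by (simp add: field_simps)
  ultimately show "16 * (K - 1) * (3/2) ^ s + 8 * 3 ^ s \<le> \<epsilon>\<^sup>2 * (K * (K - 1))"
    by simp
qed

lemma S_hat_eq_coincidence_rate: "b \<ge> 1 \<Longrightarrow> S_hat K Q b = coincidence_rate (block K b) Q"
  unfolding S_hat_def coincidence_rate_def card_block by (simp add: block_def of_bool_def)

lemma CE_est_restrict: "CE_est s K (restrict Q (block K b)) b = CE_est s K Q b"
  unfolding CE_est_def S_hat_def block_def by (intro arg_cong2[where f = "(-)"] sum.cong refl) auto

lemma length_filter_upt: "length (filter P [m..<n]) = card {b \<in> {m..<n}. P b}"
proof -
  have "length (filter P [m..<n]) = card (set (filter P [m..<n]))"
    by (rule distinct_card[symmetric]) simp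
  then show ?thesis
    by (simp add: Collect_conj_eq Int_commute)
qed

locale sic_measurement =
  fixes n :: nat and \<psi> :: "(nat \<Rightarrow> nat) \<Rightarrow> complex" and \<phi> :: "nat \<Rightarrow> nat \<Rightarrow> complex" and S :: "nat set"
  assumes pure: "pure_state n \<psi>" and sic: "sic \<phi>" and qubits: "S \<subseteq> {1..n}"

sublocale sic_measurement \<subseteq> finite_distribution "S \<rightarrow>\<^sub>E {1..4}" "sic_prob n \<psi> \<phi> S"
proof
  show "finite (S \<rightarrow>\<^sub>E {1..4::nat})"
    using qubits by (simp add: finite_PiE finite_subset)
  show "0 \<le> sic_prob n \<psi> \<phi> S q" for q
    using qubits by (rule sic_prob_nonneg)
  show "(\<Sum>q\<in>S \<rightarrow>\<^sub>E {1..4}. sic_prob n \<psi> \<phi> S q) = 1"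
    by (rule sum_sic_prob[OF pure sic qubits])
qed

context sic_measurement
begin

lemma conc_ent_eq_collision_prob: "conc_ent n \<psi> S = 1 - 3 ^ card S * collision_prob 2"
  using conc_ent_eq_sic_collision[OF pure sic qubits] unfolding collision_prob_def .

lemma collision_prob_2_le: "collision_prob 2 \<le> (1/3) ^ card S"
  using sum_sic_prob_squared_le[OF pure sic qubits] unfolding collision_prob_def .

lemma collision_prob_3_le: "collision_prob 3 \<le> (1/2) ^ card S * collision_prob 2"
  unfolding collision_prob_def sum_distrib_left
proof (rule sum_mono)
  fix q assume "q \<in> S \<rightarrow>\<^sub>E {1..4::nat}"
  then have "sic_prob n \<psi> \<phi> S q * (sic_prob n \<psi> \<phi> S q)\<^sup>2 \<le> (1/2) ^ card S * (sic_prob n \<psi> \<phi> S q)\<^sup>2"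
    using sic_prob_le[OF pure sic qubits] by (intro mult_right_mono) auto
  then show "(sic_prob n \<psi> \<phi> S q) ^ 3 \<le> (1/2) ^ card S * (sic_prob n \<psi> \<phi> S q)\<^sup>2"
    by (simp add: power3_eq_cube power2_eq_square mult.assoc)
qed

lemma expect_CE_est_far:
  assumes "\<epsilon> > 0" "b \<ge> 1"
  shows "expect (block (K_opt \<epsilon> (card S)) b)
      (\<lambda>Q. of_bool (\<epsilon> \<le> \<bar>CE_est (card S) (K_opt \<epsilon> (card S)) Q b - conc_ent n \<psi> S\<bar>)) \<le> 1/4"
proof -
  define K where "K = K_opt \<epsilon> (card S)"
  have "\<bar>CE_est (card S) K Q b - conc_ent n \<psi> S\<bar>
      = \<bar>3 ^ card S * (coincidence_rate (block K b) Q - collision_prob 2)\<bar>" for Q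
    unfolding CE_est_def conc_ent_eq_collision_prob S_hat_eq_coincidence_rate[OF assms(2)]
    by (simp add: right_diff_distrib abs_minus_commute)
  moreover have "expect (block K b)
      (\<lambda>Q. of_bool (\<epsilon> \<le> \<bar>3 ^ card S * (coincidence_rate (block K b) Q - collision_prob 2)\<bar>)) \<le> 1/4"
    using K_opt_bounds[OF assms(1), of "card S"] card_block[OF assms(2), of K]
    by (intro expect_coincidence_estimate_far collision_prob_2_le collision_prob_3_le assms(1))
      (auto simp: K_def block_def)
  ultimately show ?thesis
    unfolding K_def by simp
qed

lemma expect_median_CE_est_far:
  assumes "\<epsilon> > 0" "0 < \<delta>" "\<delta> < 1"
  shows "expect {1..N_B \<delta> * K_opt \<epsilon> (card S)} (\<lambda>Q. of_bool (\<epsilon> \<le>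
      \<bar>median (map (CE_est (card S) (K_opt \<epsilon> (card S)) Q) [1..<N_B \<delta> + 1]) - conc_ent n \<psi> S\<bar>)) \<le> \<delta>"
proof -
  define K where "K = K_opt \<epsilon> (card S)"
  define NB where "NB = N_B \<delta>"
  define far where "far b Q \<longleftrightarrow> \<epsilon> \<le> \<bar>CE_est (card S) K Q b - conc_ent n \<psi> S\<bar>" for b Q
  have "NB \<le> 2 * card {b \<in> {1..NB}. far b Q}"
    if "\<epsilon> \<le> \<bar>median (map (CE_est (card S) K Q) [1..<NB + 1]) - conc_ent n \<psi> S\<bar>" for Q
  proof -
    have "map (CE_est (card S) K Q) [1..<NB + 1] \<noteq> []"
      using N_B_ge(1)[OF assms(2,3)] unfolding NB_def by simp
    from many_far_if_median_far[OF this that]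
    have "length (map (CE_est (card S) K Q) [1..<NB + 1])
        \<le> 2 * length (filter (\<lambda>x. \<epsilon> \<le> \<bar>x - conc_ent n \<psi> S\<bar>) (map (CE_est (card S) K Q) [1..<NB + 1]))" .
    moreover have "length (map (CE_est (card S) K Q) [1..<NB + 1]) = NB"
      by simp
    moreover have "length (filter (\<lambda>x. \<epsilon> \<le> \<bar>x - conc_ent n \<psi> S\<bar>) (map (CE_est (card S) K Q) [1..<NB + 1]))
        = card {b \<in> {1..NB}. far b Q}"
      unfolding filter_map length_map length_filter_upt far_def
      by (simp add: o_def atLeastLessThanSuc_atLeastAtMost)
    ultimately show ?thesis
      by simp
  qed
  then have "expect {1..NB * K} (\<lambda>Q. of_bool (\<epsilon> \<le>
      \<bar>median (map (CE_est (card S) K Q) [1..<NB + 1]) - conc_ent n \<psi> S\<bar>))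
      \<le> expect {1..NB * K} (\<lambda>Q. of_bool (NB \<le> 2 * card {b \<in> {1..NB}. far b Q}))"
    by (intro expect_mono) simp
  also have "\<dots> \<le> (sqrt 3 / 2) ^ NB"
    using expect_CE_est_far[OF assms(1)] CE_est_restrict
    by (intro expect_majority_le) (auto simp: far_def K_def)
  also have "\<dots> \<le> \<delta>"
    unfolding NB_def by (rule sqrt3_half_power_N_B_le[OF assms(2,3)])
  finally show ?thesis
    unfolding K_def NB_def .
qed

end

theorem theorem6:
  fixes n :: nat and \<psi> :: "(nat \<Rightarrow> nat) \<Rightarrow> complex" and \<phi> :: "nat \<Rightarrow> nat \<Rightarrow> complex"
    and S :: "nat set" and \<epsilon> \<delta> :: real
  assumes "pure_state n \<psi>"
    and "sic \<phi>"
    and "S \<subseteq> {1..n}" and "S \<noteq> {}"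
    and "\<epsilon> > 0" and "0 < \<delta>" and "\<delta> < 1"
  shows "(let NB = N_B \<delta>; K = K_opt \<epsilon> (card S); M = NB * K in
     (\<Sum>Q\<in>{Q \<in> {1..M} \<rightarrow>\<^sub>E (S \<rightarrow>\<^sub>E {1..4}).
             \<bar>median (map (CE_est (card S) K Q) [1..<NB + 1]) - conc_ent n \<psi> S\<bar> \<ge> \<epsilon>}.
        \<Prod>k\<in>{1..M}. sic_prob n \<psi> \<phi> S (Q k)) \<le> \<delta>)"
proof -
  interpret sic_measurement n \<psi> \<phi> S
    using assms(1-3) by unfold_locales
  show ?thesis
    using expect_median_CE_est_far[OF assms(5-7)] expect_indicator[of "{1..N_B \<delta> * K_opt \<epsilon> (card S)}"]
    by (simp add: Let_def)
qed

end
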